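(* Let $n\ge 1$, $e\ge 1$ and $r\ge 2$ be integers, let $V=\mathbb{C}^{n+1}$, and let $\alpha_r: S_r(S_{2e}(V))\to S_2(S_{re}(V))$ be the $GL(V)$-equivariant map defined below. Then $\alpha_r$ is surjective.
   Context: $S_k(-)$ denotes the $k$-th symmetric power. Identify $S_m(V)$ with homogeneous forms of degree $m$ in variables $\underline{x}=(x_0,\dots,x_n)$, and identify $S_2(S_m(V))$ with the space of polynomials in two sets of variables $\underline{x},\underline{y}=(y_0,\dots,y_n)$ that are bihomogeneous of bidegree $(m,m)$ and symmetric under interchanging $\underline{x}$ and $\underline{y}$. The map $\alpha_r$ is defined on products $F_1\cdots F_r\in S_r(S_{2e}(V))$ of degree-$2e$ forms by: for each $i$ let $F_i(\underline{x},\underline{y})=\bigl(\sum_{\ell=0}^n y_\ell\,\partial/\partial x_\ell\bigr)^e F_i(\underline{x})$ (a form of bidegree $(e,e)$, symmetric in $\underline{x},\underline{y}$), and set $\alpha_r(F_1\cdots F_r)=\prod_{i=1}^r F_i(\underline{x},\underline{y})$; extend linearly. Equivalently, $\alpha_r$ is the composite $S_r(S_{2e})\to S_r(S_e\otimes S_e)\to S_r(S_e)\otimes S_r(S_e)\to S_{re}\otimes S_{re}\to S_2(S_{re})$ of the map induced by the coproduct, the Cauchy-decomposition projection, multiplication, and symmetrization. *)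

theory Defs
  imports "HOL-Analysis.Analysis"
begin

text \<open>Points of V = C^(n+1) are represented as functions nat => complex; only the
coordinates 0..n are used.  Forms and bihomogeneous polynomials are represented by
their polynomial functions (faithful over the infinite field C).\<close>

definition exps :: "nat \<Rightarrow> nat \<Rightarrow> (nat \<Rightarrow> nat) set" where
  "exps n m = {a. (\<forall>l>n. a l = 0) \<and> (\<Sum>l\<le>n. a l) = m}"

definition xmono :: "nat \<Rightarrow> (nat \<Rightarrow> nat) \<Rightarrow> (nat \<Rightarrow> complex) \<Rightarrow> complex" where
  "xmono n a x = (\<Prod>l\<le>n. x l ^ a l)"

definition is_form :: "nat \<Rightarrow> nat \<Rightarrow> ((nat \<Rightarrow> complex) \<Rightarrow> complex) \<Rightarrow> bool" where
  "is_form n m F \<longleftrightarrow> (\<exists>c. F = (\<lambda>x. \<Sum>a\<in>exps n m. c a * xmono n a x))"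

text \<open>S_2(S_m(V)): bihomogeneous of bidegree (m,m), symmetric in x and y.\<close>
definition is_sym_biform :: "nat \<Rightarrow> nat \<Rightarrow> ((nat \<Rightarrow> complex) \<Rightarrow> (nat \<Rightarrow> complex) \<Rightarrow> complex) \<Rightarrow> bool" where
  "is_sym_biform n m G \<longleftrightarrow>
     (\<exists>c. G = (\<lambda>x y. \<Sum>a\<in>exps n m. \<Sum>b\<in>exps n m. c a b * xmono n a x * xmono n b y))
     \<and> (\<forall>x y. G x y = G y x)"

text \<open>(\<Sum>_l y_l d/dx_l)^e F (x), computed as the e-th derivative of t |-> F(x + t y) at t = 0.\<close>
definition polar :: "nat \<Rightarrow> ((nat \<Rightarrow> complex) \<Rightarrow> complex) \<Rightarrow> (nat \<Rightarrow> complex) \<Rightarrow> (nat \<Rightarrow> complex) \<Rightarrow> complex" where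
  "polar e F x y = (deriv ^^ e) (\<lambda>t. F (\<lambda>l. x l + t * y l)) 0"

text \<open>alpha_r on a product F_1 ... F_r.\<close>
definition alpha_prod :: "nat \<Rightarrow> nat \<Rightarrow> (nat \<Rightarrow> (nat \<Rightarrow> complex) \<Rightarrow> complex) \<Rightarrow> (nat \<Rightarrow> complex) \<Rightarrow> (nat \<Rightarrow> complex) \<Rightarrow> complex" where
  "alpha_prod e r Fs x y = (\<Prod>i<r. polar e (Fs i) x y)"

end

theory Submission
  imports Defs "HOL-Computational_Algebra.Polynomial"
begin

text \<open>
  The image of \<open>\<alpha>\<^sub>r\<close> spans a subspace \<open>W\<^sub>r\<close> (\<open>alpha_span n e r\<close>) of the symmetric
  biforms. These subspaces satisfy \<open>W\<^sub>r W\<^sub>s \<subseteq> W\<^bsub>r+s\<^esub>\<close>, are stable under linear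
  substitutions of the variables, and contain the coefficients of any polynomial family
  \<open>s \<mapsto> \<Sum>\<^sub>i c\<^sub>i s\<^sup>i\<close> lying in them (evaluate at roots of unity).

  With \<open>A = x\<^sub>0 y\<^sub>0\<close>, \<open>B = x\<^sub>0 y\<^sub>1 + x\<^sub>1 y\<^sub>0\<close>, \<open>C = x\<^sub>1 y\<^sub>1\<close> we have
  \<open>(x\<^sub>0 + s x\<^sub>1)(y\<^sub>0 + s y\<^sub>1) = A + B s + C s\<^sup>2\<close>, so the polars of the binary forms of degree \<open>2e\<close>
  are, up to scalars, the coefficients \<open>g\<^sub>k\<close> of \<open>(A + B s + C s\<^sup>2)\<^sup>e\<close>. The quadratic
  expression \<open>\<Sum>\<^sub>k (-1)\<^sup>k k! (d-k)! g\<^sub>k g\<^bsub>d-k\<^esub>\<close> is invariant under translations of \<open>s\<close>;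
  completing the square shows that for \<open>d = 4e - 2j\<close> it is a nonzero multiple of
  \<open>C\<^bsup>2e-2j\<^esup> \<Delta>\<^sup>j\<close> with \<open>\<Delta> = B\<^sup>2 - 4AC = (x\<^sub>0 y\<^sub>1 - x\<^sub>1 y\<^sub>0)\<^sup>2\<close>, an element of \<open>W\<^sub>2\<close>.
  Substituting \<open>x\<^sub>1 \<mapsto> x\<^sub>1 + s x\<^sub>0\<close>, extracting coefficients and inducting downwards on
  \<open>j\<close> puts every symmetrized monomial of bidegree \<open>(2e, 2e)\<close> into \<open>W\<^sub>2\<close>, hence every
  polynomial of degree \<open>2e\<close> in \<open>A, B, C\<close>. Splitting monomials then puts every polynomial of
  degree \<open>re\<close> in \<open>A, B, C\<close> into \<open>W\<^sub>r\<close>; for \<open>r = 3\<close> one factor of a \<open>W\<^sub>2\<close>-product is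
  merged with the degree-\<open>e\<close> part, which is possible because polars are polynomials in
  \<open>A, B, C\<close>.

  Every form of degree \<open>re\<close> is a combination of powers \<open>l\<^bsup>re\<^esup>\<close> of linear
  forms, and \<open>l(x)\<^bsup>re\<^esup> m(y)\<^bsup>re\<^esup> + l(y)\<^bsup>re\<^esup> m(x)\<^bsup>re\<^esup>\<close> arises from the binary biform
  \<open>x\<^sub>0\<^bsup>re\<^esup> y\<^sub>1\<^bsup>re\<^esup> + x\<^sub>1\<^bsup>re\<^esup> y\<^sub>0\<^bsup>re\<^esup>\<close> by the substitution \<open>(x\<^sub>0, x\<^sub>1) \<mapsto> (l(x), m(x))\<close>.
\<close>

section \<open>Forms and their polars\<close>

type_synonym form = "(nat \<Rightarrow> complex) \<Rightarrow> complex"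
type_synonym biform = "(nat \<Rightarrow> complex) \<Rightarrow> (nat \<Rightarrow> complex) \<Rightarrow> complex"

lemma finite_exps: "finite (exps n m)"
proof -
  have "exps n m \<subseteq> (\<lambda>f l. if l \<le> n then f l else 0) ` ({..n} \<rightarrow>\<^sub>E {..m})"
  proof
    fix a assume a: "a \<in> exps n m"
    hence zero: "\<forall>l>n. a l = 0" and sum: "(\<Sum>l\<le>n. a l) = m" by (auto simp: exps_def)
    have "a l \<le> m" if "l \<le> n" for l
      using member_le_sum[of l "{..n}" a] that sum by simp
    hence "restrict a {..n} \<in> {..n} \<rightarrow>\<^sub>E {..m}" by auto
    moreover have "a = (\<lambda>l. if l \<le> n then restrict a {..n} l else 0)"
      using zero by (auto simp: fun_eq_iff)
    ultimately show "a \<in> (\<lambda>f l. if l \<le> n then f l else 0) ` ({..n} \<rightarrow>\<^sub>E {..m})" by blast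
  qed
  thus ?thesis by (rule finite_subset) (intro finite_imageI finite_PiE; simp)
qed

lemma exps_0: "exps n 0 = {\<lambda>l. 0}"
proof -
  have "a = (\<lambda>l. 0)" if "a \<in> exps n 0" for a
  proof
    fix l show "a l = 0" using that by (cases "l \<le> n") (auto simp: exps_def)
  qed
  thus ?thesis by (auto simp: exps_def)
qed

lemma exps_add: "a \<in> exps n p \<Longrightarrow> b \<in> exps n q \<Longrightarrow> (\<lambda>l. a l + b l) \<in> exps n (p + q)"
  by (auto simp: exps_def sum.distrib)

lemma xmono_add: "xmono n (\<lambda>l. a l + b l) x = xmono n a x * xmono n b x"
  by (simp add: xmono_def power_add prod.distrib)

lemma is_form_monomial_sum:
  assumes "finite I" "\<And>i. i \<in> I \<Longrightarrow> a i \<in> exps n m"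
  shows "is_form n m (\<lambda>x. \<Sum>i\<in>I. c i * xmono n (a i) x)"
proof -
  define d where "d b = (\<Sum>i\<in>{i\<in>I. a i = b}. c i)" for b
  have "(\<Sum>i\<in>I. c i * xmono n (a i) x) = (\<Sum>b\<in>exps n m. d b * xmono n b x)" for x
  proof -
    have "(\<Sum>b\<in>exps n m. d b * xmono n b x)
        = (\<Sum>b\<in>exps n m. \<Sum>i\<in>{i\<in>I. a i = b}. c i * xmono n (a i) x)"
      unfolding d_def sum_distrib_right by (intro sum.cong refl) auto
    also have "\<dots> = (\<Sum>i\<in>I. c i * xmono n (a i) x)"
      using assms finite_exps by (intro sum.group) auto
    finally show ?thesis by simp
  qed
  thus ?thesis unfolding is_form_def by blast
qed

lemma is_form_xmono: "a \<in> exps n m \<Longrightarrow> is_form n m (xmono n a)"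
  using is_form_monomial_sum[of "{a}" "\<lambda>a. a" n m "\<lambda>_. 1"] by simp

lemma is_form_mult:
  assumes "is_form n p F" "is_form n q G"
  shows "is_form n (p + q) (\<lambda>x. F x * G x)"
proof -
  obtain c where c: "F = (\<lambda>x. \<Sum>a\<in>exps n p. c a * xmono n a x)"
    using assms(1) by (auto simp: is_form_def)
  obtain d where d: "G = (\<lambda>x. \<Sum>b\<in>exps n q. d b * xmono n b x)"
    using assms(2) by (auto simp: is_form_def)
  have "F x * G x = (\<Sum>(a, b)\<in>exps n p \<times> exps n q. (c a * d b) * xmono n (\<lambda>l. a l + b l) x)" for x
    unfolding c d sum_product sum.cartesian_product by (simp add: xmono_add mult_ac)
  moreover have "is_form n (p + q)
      (\<lambda>x. \<Sum>ab\<in>exps n p \<times> exps n q. (c (fst ab) * d (snd ab)) * xmono n (\<lambda>l. fst ab l + snd ab l) x)"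
    by (intro is_form_monomial_sum) (auto simp: finite_exps exps_add)
  ultimately show ?thesis by (simp add: case_prod_beta)
qed

lemma is_form_lincomb:
  assumes "is_form n m F" "is_form n m G"
  shows "is_form n m (\<lambda>x. a * F x + b * G x)"
proof -
  obtain c where "F = (\<lambda>x. \<Sum>u\<in>exps n m. c u * xmono n u x)"
    using assms(1) by (auto simp: is_form_def)
  moreover obtain d where "G = (\<lambda>x. \<Sum>u\<in>exps n m. d u * xmono n u x)"
    using assms(2) by (auto simp: is_form_def)
  ultimately have "(\<lambda>x. a * F x + b * G x) = (\<lambda>x. \<Sum>u\<in>exps n m. (a * c u + b * d u) * xmono n u x)"
    by (auto simp: sum.distrib sum_distrib_left algebra_simps)
  thus ?thesis unfolding is_form_def by (intro exI[of _ "\<lambda>u. a * c u + b * d u"])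
qed

lemma is_form_sum:
  "finite S \<Longrightarrow> (\<And>s. s \<in> S \<Longrightarrow> is_form n m (F s)) \<Longrightarrow>
     is_form n m (\<lambda>x. \<Sum>s\<in>S. c s * F s x)"
proof (induction S rule: finite_induct)
  case empty
  show ?case unfolding is_form_def by (rule exI[of _ "\<lambda>_. 0"]) simp
next
  case (insert s S)
  thus ?case using is_form_lincomb[of n m "F s" _ "c s" 1] by simp
qed

lemma is_form_const: "is_form n 0 (\<lambda>x. a)"
  unfolding is_form_def exps_0 by (rule exI[of _ "\<lambda>_. a"]) (simp add: xmono_def)

lemma is_form_power: "is_form n p F \<Longrightarrow> is_form n (k * p) (\<lambda>x. F x ^ k)"
  by (induction k) (simp_all add: is_form_const is_form_mult)

definition lin_form :: "nat \<Rightarrow> (nat \<Rightarrow> complex) \<Rightarrow> form" where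
  "lin_form n w x = (\<Sum>l\<le>n. w l * x l)"

lemma lin_form_line: "lin_form n w (\<lambda>l. x l + t * y l) = lin_form n w x + t * lin_form n w y"
  by (simp add: lin_form_def algebra_simps sum.distrib sum_distrib_left)

lemma is_form_lin_form: "is_form n 1 (lin_form n w)"
proof -
  define a :: "nat \<Rightarrow> nat \<Rightarrow> nat" where "a l = (\<lambda>i. if i = l then 1 else 0)" for l
  have a: "a l \<in> exps n 1" if "l \<le> n" for l
    using that by (auto simp: exps_def a_def)
  have "xmono n (a l) x = x l" if "l \<le> n" for l x
    using that unfolding xmono_def a_def by (simp add: if_distrib prod.delta cong: if_cong)
  hence "lin_form n w = (\<lambda>x. \<Sum>l\<le>n. w l * xmono n (a l) x)"
    by (auto simp: lin_form_def fun_eq_iff)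
  moreover have "is_form n 1 (\<lambda>x. \<Sum>l\<le>n. w l * xmono n (a l) x)"
    using a by (intro is_form_monomial_sum) auto
  ultimately show ?thesis by simp
qed

lemma deriv_funpow_poly: "(deriv ^^ k) (poly p) = poly ((pderiv ^^ k) p)"
proof (induction k)
  case (Suc k)
  have "deriv (poly ((pderiv ^^ k) p)) = poly (pderiv ((pderiv ^^ k) p))"
    by (rule ext, rule DERIV_imp_deriv, rule poly_DERIV)
  thus ?case by (simp add: Suc)
qed simp

lemma poly_higher_pderiv_0: "poly ((pderiv ^^ k) p) 0 = fact k * coeff p k"
  by (simp add: poly_0_coeff_0 coeff_higher_pderiv pochhammer_fact)

lemma polar_eq_coeff:
  assumes "\<And>t. F (\<lambda>l. x l + t * y l) = poly p t"
  shows "polar e F x y = fact e * coeff p e"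
proof -
  have "(\<lambda>t. F (\<lambda>l. x l + t * y l)) = poly p" using assms by (simp add: fun_eq_iff)
  thus ?thesis unfolding polar_def by (simp add: deriv_funpow_poly poly_higher_pderiv_0)
qed

lemma form_along_line:
  assumes "is_form n m F"
  obtains p where "\<And>t. F (\<lambda>l. x l + t * y l) = poly p t"
proof -
  obtain c where "F = (\<lambda>x. \<Sum>a\<in>exps n m. c a * xmono n a x)"
    using assms by (auto simp: is_form_def)
  hence "F (\<lambda>l. x l + t * y l) = poly (\<Sum>a\<in>exps n m. smult (c a) (\<Prod>l\<le>n. [:x l, y l:] ^ a l)) t" for t
    by (simp add: poly_sum poly_prod xmono_def algebra_simps)
  thus ?thesis by (rule that)
qed

lemma polar_sum:
  assumes "finite S" "\<And>s. s \<in> S \<Longrightarrow> is_form n m (F s)"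
  shows "polar e (\<lambda>z. \<Sum>s\<in>S. c s * F s z) x y = (\<Sum>s\<in>S. c s * polar e (F s) x y)"
proof -
  have "\<forall>s\<in>S. \<exists>p. \<forall>t. F s (\<lambda>l. x l + t * y l) = poly p t"
    using form_along_line[OF assms(2)] by metis
  then obtain p where p: "\<And>s t. s \<in> S \<Longrightarrow> F s (\<lambda>l. x l + t * y l) = poly (p s) t"
    by (metis bchoice)
  have "polar e (\<lambda>z. \<Sum>s\<in>S. c s * F s z) x y = fact e * coeff (\<Sum>s\<in>S. smult (c s) (p s)) e"
    by (rule polar_eq_coeff) (simp add: p poly_sum)
  also have "\<dots> = (\<Sum>s\<in>S. c s * polar e (F s) x y)"
    by (simp add: coeff_sum sum_distrib_left polar_eq_coeff[OF p] mult_ac)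
  finally show ?thesis .
qed

section \<open>The span of the image of \<open>\<alpha>\<^sub>r\<close>\<close>

definition alpha_span :: "nat \<Rightarrow> nat \<Rightarrow> nat \<Rightarrow> biform \<Rightarrow> bool" where
  "alpha_span n e r G \<longleftrightarrow> (\<exists>(k::nat) (c::nat \<Rightarrow> complex) (Fs::nat \<Rightarrow> nat \<Rightarrow> form).
     (\<forall>j<k. \<forall>i<r. is_form n (2 * e) (Fs j i)) \<and>
     G = (\<lambda>x y. \<Sum>j<k. c j * alpha_prod e r (Fs j) x y))"

lemma alpha_spanE:
  assumes "alpha_span n e r G"
  obtains k :: nat and c :: "nat \<Rightarrow> complex" and Fs :: "nat \<Rightarrow> nat \<Rightarrow> form"
  where "\<forall>j<k. \<forall>i<r. is_form n (2 * e) (Fs j i)"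
    and "G = (\<lambda>x y. \<Sum>j<k. c j * alpha_prod e r (Fs j) x y)"
  using assms unfolding alpha_span_def by (elim exE conjE) (rule that)

lemma alpha_spanI:
  fixes k :: nat and c :: "nat \<Rightarrow> complex" and Fs :: "nat \<Rightarrow> nat \<Rightarrow> form"
  assumes "\<And>j i. j < k \<Longrightarrow> i < r \<Longrightarrow> is_form n (2 * e) (Fs j i)"
    and "\<And>x y. G x y = (\<Sum>j<k. c j * alpha_prod e r (Fs j) x y)"
  shows "alpha_span n e r G"
  unfolding alpha_span_def
  by (rule exI[of _ k], rule exI[of _ c], rule exI[of _ Fs]) (use assms in \<open>auto simp: fun_eq_iff\<close>)

lemma alpha_span_cong: "alpha_span n e r F \<Longrightarrow> (\<And>x y. F x y = G x y) \<Longrightarrow> alpha_span n e r G"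
  by (metis ext)

lemma alpha_span_alpha_prod:
  "(\<And>i. i < r \<Longrightarrow> is_form n (2 * e) (Fs i)) \<Longrightarrow> alpha_span n e r (alpha_prod e r Fs)"
  by (rule alpha_spanI[where k = "Suc 0" and c = "\<lambda>_. 1" and Fs = "\<lambda>_. Fs"]) auto

lemma alpha_span_polar: "is_form n (2 * e) F \<Longrightarrow> alpha_span n e 1 (polar e F)"
proof -
  assume "is_form n (2 * e) F"
  hence "alpha_span n e 1 (alpha_prod e 1 (\<lambda>_. F))" by (intro alpha_span_alpha_prod)
  moreover have "alpha_prod e 1 (\<lambda>_. F) = polar e F" by (simp add: alpha_prod_def fun_eq_iff)
  ultimately show ?thesis by simp
qed

lemma alpha_span_zero: "alpha_span n e r (\<lambda>x y. 0)"
  by (rule alpha_spanI[where k = 0]) auto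

lemma sum_lessThan_add: "(\<Sum>j<a + b. f j) = (\<Sum>j<a. f j) + (\<Sum>j<b. f (a + j))" for a b :: nat
  by (induction b) (simp_all add: add.assoc)

lemma alpha_span_add:
  assumes "alpha_span n e r F" "alpha_span n e r G"
  shows "alpha_span n e r (\<lambda>x y. F x y + G x y)"
proof -
  obtain k1 :: nat and c1 :: "nat \<Rightarrow> complex" and Fs1 :: "nat \<Rightarrow> nat \<Rightarrow> form"
    where 1: "\<forall>j<k1. \<forall>i<r. is_form n (2 * e) (Fs1 j i)"
    "F = (\<lambda>x y. \<Sum>j<k1. c1 j * alpha_prod e r (Fs1 j) x y)" using assms(1) by (rule alpha_spanE)
  obtain k2 :: nat and c2 :: "nat \<Rightarrow> complex" and Fs2 :: "nat \<Rightarrow> nat \<Rightarrow> form"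
    where 2: "\<forall>j<k2. \<forall>i<r. is_form n (2 * e) (Fs2 j i)"
    "G = (\<lambda>x y. \<Sum>j<k2. c2 j * alpha_prod e r (Fs2 j) x y)" using assms(2) by (rule alpha_spanE)
  define c where "c j = (if j < k1 then c1 j else c2 (j - k1))" for j
  define Fs where "Fs j = (if j < k1 then Fs1 j else Fs2 (j - k1))" for j
  show ?thesis
  proof (rule alpha_spanI[where k = "k1 + k2" and c = c and Fs = Fs])
    show "is_form n (2 * e) (Fs j i)" if "j < k1 + k2" "i < r" for j i
      using that 1(1) 2(1) by (auto simp: Fs_def)
    show "F x y + G x y = (\<Sum>j<k1 + k2. c j * alpha_prod e r (Fs j) x y)" for x y
      by (simp add: 1(2) 2(2) c_def Fs_def sum_lessThan_add)
  qed
qed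

lemma alpha_span_cmult: "alpha_span n e r F \<Longrightarrow> alpha_span n e r (\<lambda>x y. a * F x y)"
  by (erule alpha_spanE, rule alpha_spanI[where c = "\<lambda>j. a * _ j"])
     (auto simp: sum_distrib_left mult.assoc)

lemma alpha_span_diff:
  "alpha_span n e r F \<Longrightarrow> alpha_span n e r G \<Longrightarrow> alpha_span n e r (\<lambda>x y. F x y - G x y)"
  using alpha_span_add[OF _ alpha_span_cmult[of n e r G "-1"]] by simp

lemma alpha_span_sum:
  "finite S \<Longrightarrow> (\<And>s. s \<in> S \<Longrightarrow> alpha_span n e r (F s)) \<Longrightarrow>
     alpha_span n e r (\<lambda>x y. \<Sum>s\<in>S. F s x y)"
  by (induction S rule: finite_induct) (simp_all add: alpha_span_zero alpha_span_add)

lemma alpha_span_lincomb: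
  "finite S \<Longrightarrow> (\<And>s. s \<in> S \<Longrightarrow> alpha_span n e r (F s)) \<Longrightarrow>
     alpha_span n e r (\<lambda>x y. \<Sum>s\<in>S. c s * F s x y)"
  by (intro alpha_span_sum alpha_span_cmult)

lemma alpha_prod_append:
  "alpha_prod e (r1 + r2) (\<lambda>i. if i < r1 then Fs i else Gs (i - r1)) x y
     = alpha_prod e r1 Fs x y * alpha_prod e r2 Gs x y"
  unfolding alpha_prod_def by (induction r2) (simp_all add: mult.assoc)

lemma alpha_span_mult:
  assumes "alpha_span n e r1 F" "alpha_span n e r2 G"
  shows "alpha_span n e (r1 + r2) (\<lambda>x y. F x y * G x y)"
proof -
  obtain k1 :: nat and c1 :: "nat \<Rightarrow> complex" and Fs1 :: "nat \<Rightarrow> nat \<Rightarrow> form"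
    where 1: "\<forall>j<k1. \<forall>i<r1. is_form n (2 * e) (Fs1 j i)"
    "F = (\<lambda>x y. \<Sum>j<k1. c1 j * alpha_prod e r1 (Fs1 j) x y)" using assms(1) by (rule alpha_spanE)
  obtain k2 :: nat and c2 :: "nat \<Rightarrow> complex" and Fs2 :: "nat \<Rightarrow> nat \<Rightarrow> form"
    where 2: "\<forall>j<k2. \<forall>i<r2. is_form n (2 * e) (Fs2 j i)"
    "G = (\<lambda>x y. \<Sum>j<k2. c2 j * alpha_prod e r2 (Fs2 j) x y)" using assms(2) by (rule alpha_spanE)
  define H where "H j1 j2 = (\<lambda>i. if i < r1 then Fs1 j1 i else Fs2 j2 (i - r1))" for j1 j2
  have "alpha_span n e (r1 + r2) (\<lambda>x y. \<Sum>j1<k1. \<Sum>j2<k2. c1 j1 * c2 j2 * alpha_prod e (r1 + r2) (H j1 j2) x y)"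
    using 1(1) 2(1) by (intro alpha_span_sum alpha_span_cmult alpha_span_alpha_prod) (auto simp: H_def)
  thus ?thesis
    by (rule alpha_span_cong)
       (simp add: 1(2) 2(2) H_def alpha_prod_append sum_product mult_ac)
qed

definition binary_subst :: "nat \<Rightarrow> (nat \<Rightarrow> complex) \<Rightarrow> (nat \<Rightarrow> complex) \<Rightarrow> (nat \<Rightarrow> complex) \<Rightarrow> nat \<Rightarrow> complex" where
  "binary_subst n v w x = (\<lambda>l. if l = 0 then lin_form n v x else if l = 1 then lin_form n w x else 0)"

lemma polar_binary_subst:
  "polar e (\<lambda>z. F (binary_subst n v w z)) x y = polar e F (binary_subst n v w x) (binary_subst n v w y)"
proof -
  have "binary_subst n v w (\<lambda>l. x l + t * y l) = (\<lambda>l. binary_subst n v w x l + t * binary_subst n v w y l)" for t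
    by (auto simp: binary_subst_def lin_form_line)
  thus ?thesis unfolding polar_def by simp
qed

lemma exps_1: "a \<in> exps 1 m \<Longrightarrow> a 0 + a 1 = m"
  by (simp add: exps_def atMost_Suc)

lemma is_form_binary_subst:
  assumes "is_form 1 m F"
  shows "is_form n m (\<lambda>z. F (binary_subst n v w z))"
proof -
  obtain c where c: "F = (\<lambda>x. \<Sum>a\<in>exps 1 m. c a * xmono 1 a x)"
    using assms by (auto simp: is_form_def)
  have "is_form n m (\<lambda>z. lin_form n v z ^ a 0 * lin_form n w z ^ a 1)" if "a \<in> exps 1 m" for a
    using is_form_mult[OF is_form_power is_form_power, OF is_form_lin_form is_form_lin_form]
      exps_1[OF that] by fastforce
  hence "is_form n m (\<lambda>z. \<Sum>a\<in>exps 1 m. c a * (lin_form n v z ^ a 0 * lin_form n w z ^ a 1))"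
    by (intro is_form_sum finite_exps)
  moreover have "F (binary_subst n v w z)
      = (\<Sum>a\<in>exps 1 m. c a * (lin_form n v z ^ a 0 * lin_form n w z ^ a 1))" for z
    by (simp add: c xmono_def atMost_Suc binary_subst_def mult.commute)
  ultimately show ?thesis by simp
qed

lemma alpha_span_binary_subst:
  assumes "alpha_span 1 e r G"
  shows "alpha_span n e r (\<lambda>x y. G (binary_subst n v w x) (binary_subst n v w y))"
proof -
  obtain k :: nat and c :: "nat \<Rightarrow> complex" and Fs :: "nat \<Rightarrow> nat \<Rightarrow> form"
    where Fs: "\<forall>j<k. \<forall>i<r. is_form 1 (2 * e) (Fs j i)"
    and G: "G = (\<lambda>x y. \<Sum>j<k. c j * alpha_prod e r (Fs j) x y)" using assms by (rule alpha_spanE)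
  show ?thesis
  proof (rule alpha_spanI[where Fs = "\<lambda>j i z. Fs j i (binary_subst n v w z)"])
    show "is_form n (2 * e) (\<lambda>z. Fs j i (binary_subst n v w z))" if "j < k" "i < r" for j i
      using Fs that by (simp add: is_form_binary_subst)
  qed (simp add: G alpha_prod_def polar_binary_subst)
qed

definition unit_root :: "nat \<Rightarrow> complex" where
  "unit_root N = exp (2 * pi * \<i> / N)"

lemma unit_root_power_eq_1_iff: "N > 0 \<Longrightarrow> unit_root N ^ q = 1 \<longleftrightarrow> N dvd q"
proof -
  assume "N > 0"
  have "unit_root N ^ q = exp (2 * of_real pi * \<i> * of_nat q / of_nat N)"
    by (simp add: unit_root_def exp_of_nat_mult[symmetric] mult_ac)
  thus ?thesis using complex_root_unity_eq_1[of N q] \<open>N > 0\<close> by simp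
qed

lemma sum_unit_root_powers:
  assumes "N > 0"
  shows "(\<Sum>j<N. (unit_root N ^ q) ^ j) = (if N dvd q then of_nat N else 0)"
proof (cases "N dvd q")
  case False
  have "(unit_root N ^ q) ^ N = 1"
    using assms by (simp add: unit_root_power_eq_1_iff flip: power_mult)
  thus ?thesis using False assms by (simp add: sum_gp_strict unit_root_power_eq_1_iff)
next
  case True
  hence "unit_root N ^ q = 1" using assms by (simp add: unit_root_power_eq_1_iff)
  thus ?thesis using True by simp
qed

lemma coeff_by_roots_of_unity:
  fixes c :: "nat \<Rightarrow> complex"
  assumes "k < N"
  shows "c k = (\<Sum>j<N. (unit_root N ^ j) ^ (N - k) / N * (\<Sum>i<N. c i * (unit_root N ^ j) ^ i))"
proof -
  have dvd_iff: "N dvd (N - k + i) \<longleftrightarrow> i = k" if "i < N" for i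
  proof
    assume "N dvd (N - k + i)"
    then obtain t where t: "N - k + i = N * t" by (rule dvdE)
    moreover have "0 < N - k + i" "N - k + i < 2 * N" using that assms by auto
    ultimately have "t = 1" by (simp add: mult.commute[of N])
    thus "i = k" using t assms by simp
  qed (use assms in simp)
  have "(z ^ j) ^ (N - k) * (z ^ j) ^ i = (z ^ (N - k + i)) ^ j" for z :: complex and i j
    by (simp add: power_add algebra_simps flip: power_mult)
  hence "(\<Sum>j<N. (unit_root N ^ j) ^ (N - k) * (\<Sum>i<N. c i * (unit_root N ^ j) ^ i))
      = (\<Sum>j<N. \<Sum>i<N. c i * (unit_root N ^ (N - k + i)) ^ j)"
    by (simp add: sum_distrib_left mult.left_commute)
  also have "\<dots> = (\<Sum>i<N. c i * (\<Sum>j<N. (unit_root N ^ (N - k + i)) ^ j))"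
    by (subst sum.swap) (simp add: sum_distrib_left)
  also have "\<dots> = (\<Sum>i<N. if i = k then of_nat N * c k else 0)"
  proof (intro sum.cong refl)
    fix i assume "i \<in> {..<N}"
    thus "c i * (\<Sum>j<N. (unit_root N ^ (N - k + i)) ^ j) = (if i = k then of_nat N * c k else 0)"
      using sum_unit_root_powers[of N "N - k + i"] dvd_iff[of i] assms by auto
  qed
  also have "\<dots> = of_nat N * c k"
    using assms by simp
  finally show ?thesis using assms by (simp add: sum_divide_distrib[symmetric] sum_distrib_left[symmetric])
qed

lemma alpha_span_coeff:
  assumes "\<And>s. alpha_span n e r (\<lambda>x y. \<Sum>i<N. c i x y * s ^ i)" and "k < N"
  shows "alpha_span n e r (c k)"
proof -
  have "alpha_span n e r (\<lambda>x y. \<Sum>j<N. (unit_root N ^ j) ^ (N - k) / N * (\<Sum>i<N. c i x y * (unit_root N ^ j) ^ i))"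
    by (intro alpha_span_lincomb assms(1)) simp
  thus ?thesis by (rule alpha_span_cong) (rule coeff_by_roots_of_unity[OF assms(2), symmetric])
qed

lemma alpha_span_of_congruent:
  assumes "finite S" "alpha_span n e r (\<lambda>x y. \<Sum>i\<in>S. c i * F i x y)"
    and "\<And>i. i \<in> S \<Longrightarrow> c i \<noteq> 0 \<Longrightarrow> alpha_span n e r (\<lambda>x y. F i x y - G x y)"
    and "(\<Sum>i\<in>S. c i) \<noteq> 0"
  shows "alpha_span n e r G"
proof -
  have "alpha_span n e r (\<lambda>x y. \<Sum>i\<in>S. c i * (F i x y - G x y))"
  proof (intro alpha_span_sum)
    fix i assume "i \<in> S"
    show "alpha_span n e r (\<lambda>x y. c i * (F i x y - G x y))"
    proof (cases "c i = 0")
      case False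
      thus ?thesis using assms(3)[OF \<open>i \<in> S\<close>] by (intro alpha_span_cmult)
    qed (simp add: alpha_span_zero)
  qed (rule assms(1))
  with assms(2) have "alpha_span n e r (\<lambda>x y. 1 / (\<Sum>i\<in>S. c i)
      * ((\<Sum>i\<in>S. c i * F i x y) - (\<Sum>i\<in>S. c i * (F i x y - G x y))))"
    by (intro alpha_span_cmult alpha_span_diff)
  thus ?thesis using assms(4)
    by (simp add: right_diff_distrib sum_subtractf flip: sum_distrib_right)
qed

section \<open>Transvectants of a univariate polynomial with itself\<close>

lemma higher_pderiv_eq_0:
  fixes u :: "'a::{comm_semiring_1,semiring_no_zero_divisors} poly"
  assumes "degree u < m"
  shows "(pderiv ^^ m) u = 0"
proof (rule poly_eqI)
  fix n
  have "coeff u (n + m) = 0" using assms by (intro coeff_eq_0) simp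
  thus "coeff ((pderiv ^^ m) u) n = coeff 0 n" by (simp add: coeff_higher_pderiv)
qed

lemma pderiv_sum: "pderiv (\<Sum>k\<in>A. f k) = (\<Sum>k\<in>A. pderiv (f k))"
  by (induction A rule: infinite_finite_induct) (simp_all add: pderiv_add)

lemma poly_higher_pderiv_shift:
  fixes u :: "'a::{comm_semiring_1,semiring_no_zero_divisors,semiring_char_0} poly"
  shows "poly ((pderiv ^^ k) u) c = fact k * coeff (pcompose u [:c, 1:]) k"
proof -
  have "(pderiv ^^ k) (pcompose u [:c, 1:]) = pcompose ((pderiv ^^ k) u) [:c, 1:]"
    by (induction k) (simp_all add: pderiv_pcompose pderiv_pCons)
  hence "poly ((pderiv ^^ k) u) c = poly ((pderiv ^^ k) (pcompose u [:c, 1:])) 0"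
    by (simp add: poly_pcompose)
  thus ?thesis by (simp add: poly_0_coeff_0 coeff_higher_pderiv pochhammer_fact)
qed

lemma coeff_linear_poly_power:
  fixes a b :: "'a::comm_ring_1"
  shows "coeff ([:a, b:] ^ n) k = of_nat (n choose k) * a ^ (n - k) * b ^ k"
proof -
  have "[:a, b:] ^ n = (\<Sum>i\<le>n. monom (of_nat (n choose i) * a ^ (n - i) * b ^ i) i)"
  proof -
    have "[:a, b:] = monom b 1 + [:a:]" by (simp add: monom_Suc monom_0)
    hence "[:a, b:] ^ n = (\<Sum>i\<le>n. of_nat (n choose i) * monom b 1 ^ i * [:a:] ^ (n - i))"
      by (simp only: binomial_ring)
    also have "\<dots> = (\<Sum>i\<le>n. monom (of_nat (n choose i) * a ^ (n - i) * b ^ i) i)"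
      by (simp add: monom_power mult_monom of_nat_poly mult_ac flip: monom_0)
    finally show ?thesis .
  qed
  thus ?thesis by (simp add: coeff_sum binomial_eq_0)
qed

lemma poly_eq_sum_atMost:
  fixes p :: "'a::comm_semiring_1 poly"
  assumes "degree p \<le> N"
  shows "poly p s = (\<Sum>k\<le>N. coeff p k * s ^ k)"
  unfolding poly_altdef using assms by (intro sum.mono_neutral_left) (auto simp: coeff_eq_0)

text \<open>\<open>transvectant d u = \<Sum>\<^sub>k (-1)\<^sup>k u\<^bsup>(k)\<^esup>(0) u\<^bsup>(d-k)\<^esup>(0)\<close> is, up to normalization, the \<open>d\<close>-th
  transvectant with itself of the binary form of degree \<open>d\<close> that \<open>u\<close> dehomogenizes. For
  \<open>degree u \<le> d\<close> it is invariant under translations of the variable, because the derivative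
  of \<open>transvectant_poly d u\<close> telescopes.\<close>

definition transvectant_poly :: "nat \<Rightarrow> 'a::field_char_0 poly \<Rightarrow> 'a poly" where
  "transvectant_poly d u = (\<Sum>k\<le>d. smult ((-1) ^ k) ((pderiv ^^ k) u * (pderiv ^^ (d - k)) u))"

definition transvectant :: "nat \<Rightarrow> 'a::field_char_0 poly \<Rightarrow> 'a" where
  "transvectant d u = (\<Sum>k\<le>d. (-1) ^ k * fact k * fact (d - k) * coeff u k * coeff u (d - k))"

lemma pderiv_transvectant_poly:
  assumes "degree u \<le> d"
  shows "pderiv (transvectant_poly d u) = 0"
proof -
  define D where "D k = (pderiv ^^ k) u" for k
  define b where "b k = smult ((-1) ^ k) (D k * D (Suc d - k))" for k
  have "pderiv (transvectant_poly d u) = (\<Sum>k\<le>d. b k - b (Suc k))"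
    unfolding transvectant_poly_def pderiv_sum D_def[symmetric]
  proof (intro sum.cong refl)
    fix k assume "k \<in> {..d}"
    hence "Suc d - k = Suc (d - k)" by simp
    thus "pderiv (smult ((-1) ^ k) (D k * D (d - k))) = b k - b (Suc k)"
      by (simp add: b_def D_def pderiv_smult pderiv_mult smult_add_right algebra_simps)
  qed
  also have "\<dots> = b 0 - b (Suc d)" by (rule sum_telescope)
  also have "D (Suc d) = 0" unfolding D_def using assms by (intro higher_pderiv_eq_0) simp
  hence "b 0 - b (Suc d) = 0" by (simp add: b_def)
  finally show ?thesis .
qed

lemma transvectant_eq_poly_transvectant_poly:
  "transvectant d (pcompose u [:c, 1:]) = poly (transvectant_poly d u) c"
  by (simp add: transvectant_def transvectant_poly_def poly_sum poly_higher_pderiv_shift mult_ac)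

lemma transvectant_shift:
  assumes "degree u \<le> d"
  shows "transvectant d (pcompose u [:c, 1:]) = transvectant d u"
proof -
  have "degree (transvectant_poly d u) = 0"
    using pderiv_transvectant_poly[OF assms] by (simp add: pderiv_eq_0_iff)
  hence const: "transvectant_poly d u = [:coeff (transvectant_poly d u) 0:]"
    by (rule degree_0_id[symmetric])
  have "poly (transvectant_poly d u) c = poly (transvectant_poly d u) 0"
    by (subst (1 2) const) simp
  thus ?thesis
    using transvectant_eq_poly_transvectant_poly[of d u c] transvectant_eq_poly_transvectant_poly[of d u 0]
    by simp
qed

lemma coeff_even_poly_power:
  fixes a b :: "'a::comm_ring_1"
  shows "coeff ([:a, 0, b:] ^ n) k =
    (if even k then of_nat (n choose (k div 2)) * a ^ (n - k div 2) * b ^ (k div 2) else 0)"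
proof -
  define f where "f i = of_nat (n choose i) * a ^ (n - i) * b ^ i" for i
  have "[:a, 0, b:] = monom b 2 + [:a:]" by (simp add: monom_Suc monom_0 numeral_2_eq_2)
  hence "[:a, 0, b:] ^ n = (\<Sum>i\<le>n. of_nat (n choose i) * monom b 2 ^ i * [:a:] ^ (n - i))"
    by (simp only: binomial_ring)
  also have "\<dots> = (\<Sum>i\<le>n. monom (f i) (2 * i))"
    by (simp add: f_def monom_power mult_monom of_nat_poly mult_ac flip: monom_0)
  finally have "coeff ([:a, 0, b:] ^ n) k = (\<Sum>i\<le>n. if 2 * i = k then f i else 0)"
    by (simp add: coeff_sum coeff_monom)
  also have "\<dots> = (if even k then f (k div 2) else 0)"
  proof (cases "even k")
    case True
    then obtain i0 where "k = 2 * i0" by (rule evenE)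
    thus ?thesis by (simp add: f_def binomial_eq_0)
  qed (auto intro!: sum.neutral)
  finally show ?thesis by (simp add: f_def)
qed

lemma coeff_even_poly_power_double:
  fixes a b :: "'a::comm_ring_1"
  shows "coeff ([:a, 0, b:] ^ n) (2 * i) = of_nat (n choose i) * a ^ (n - i) * b ^ i"
  by (simp add: coeff_even_poly_power)

lemma sum_atMost_double_even:
  "(\<Sum>k\<le>2 * h. if even k then f (k div 2) else 0) = (\<Sum>i\<le>h. f i)" for h :: nat
  by (induction h) simp_all

definition transvectant_const :: "nat \<Rightarrow> nat \<Rightarrow> nat" where
  "transvectant_const e h = (\<Sum>i\<le>h. fact (2 * i) * fact (2 * (h - i)) * (e choose i) * (e choose (h - i)))"

lemma transvectant_even_power:
  fixes a b :: "'a::field_char_0"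
  assumes "e \<le> h" "h \<le> 2 * e"
  shows "transvectant (2 * h) ([:a, 0, b:] ^ e) = of_nat (transvectant_const e h) * a ^ (2 * e - h) * b ^ h"
proof -
  define g :: "nat \<Rightarrow> 'a" where
    "g i = of_nat (fact (2 * i) * fact (2 * (h - i)) * (e choose i) * (e choose (h - i))) * (a ^ (2 * e - h) * b ^ h)" for i
  have "(-1) ^ k * fact k * fact (2 * h - k) * coeff ([:a, 0, b:] ^ e) k * coeff ([:a, 0, b:] ^ e) (2 * h - k)
      = (if even k then g (k div 2) else 0)" if "k \<le> 2 * h" for k
  proof (cases "even k")
    case True
    then obtain i where k: "k = 2 * i" by (rule evenE)
    have hk: "2 * h - 2 * i = 2 * (h - i)" by simp
    have "(-1) ^ k * fact k * fact (2 * h - k) * coeff ([:a, 0, b:] ^ e) k * coeff ([:a, 0, b:] ^ e) (2 * h - k)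
        = fact (2 * i) * fact (2 * (h - i)) * of_nat ((e choose i) * (e choose (h - i)))
          * ((a ^ (e - i) * a ^ (e - (h - i))) * (b ^ i * b ^ (h - i)))"
      unfolding k hk coeff_even_poly_power_double by (simp add: mult_ac)
    also have "\<dots> = g i"
    proof (cases "i \<le> e \<and> h - i \<le> e")
      case True
      have "(e - i) + (e - (h - i)) = 2 * e - h" "i + (h - i) = h" using True that k assms by auto
      hence "a ^ (e - i) * a ^ (e - (h - i)) = a ^ (2 * e - h)" "b ^ i * b ^ (h - i) = b ^ h"
        by (metis power_add)+
      thus ?thesis by (simp add: g_def mult_ac)
    qed (auto simp: g_def binomial_eq_0)
    finally show ?thesis by (simp add: k)
  qed (use that in \<open>simp add: coeff_even_poly_power\<close>)
  hence "transvectant (2 * h) ([:a, 0, b:] ^ e) = (\<Sum>k\<le>2 * h. if even k then g (k div 2) else 0)"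
    unfolding transvectant_def by (intro sum.cong) auto
  also have "\<dots> = of_nat (transvectant_const e h) * (a ^ (2 * e - h) * b ^ h)"
    by (simp add: sum_atMost_double_even g_def transvectant_const_def sum_distrib_right)
  finally show ?thesis by (simp add: mult.assoc)
qed

definition kappa :: "nat \<Rightarrow> nat \<Rightarrow> 'a::field_char_0" where
  "kappa e j = (-1/4) ^ j * of_nat (transvectant_const e (2 * e - j))"

lemma kappa_nonzero: "j \<le> e \<Longrightarrow> kappa e j \<noteq> 0"
proof -
  assume "j \<le> e"
  have "0 < fact (2 * e) * fact (2 * (2 * e - j - e)) * (e choose e) * (e choose (2 * e - j - e))"
    using \<open>j \<le> e\<close> by (simp add: zero_less_binomial_iff)
  also have "\<dots> \<le> transvectant_const e (2 * e - j)"
    unfolding transvectant_const_def using \<open>j \<le> e\<close>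
    by (intro member_le_sum[of e, where f = "\<lambda>i. fact (2 * i) * fact (2 * (2 * e - j - i))
          * (e choose i) * (e choose (2 * e - j - i))"]) auto
  finally show ?thesis by (simp add: kappa_def)
qed

lemma pcompose_power_left: "pcompose (p ^ n) q = pcompose p q ^ n"
  by (induction n) (simp_all add: pcompose_mult pcompose_1)

lemma degree_quadratic_power: "degree ([:a, b, c:] ^ e) \<le> 2 * e"
proof -
  have "degree ([:a, b, c:] ^ e) \<le> degree [:a, b, c:] * e" by (rule degree_power_le)
  also have "\<dots> \<le> 2 * e" by (intro mult_right_mono) auto
  finally show ?thesis .
qed

lemma transvectant_quadratic_power_nonzero:
  fixes A B C :: "'a::field_char_0"
  assumes j: "j \<le> e" and C: "C \<noteq> 0"
  shows "transvectant (4 * e - 2 * j) ([:A, B, C:] ^ e) = kappa e j * C ^ (2 * e - 2 * j) * (B\<^sup>2 - 4 * A * C) ^ j"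
proof -
  define a where "a = -(B\<^sup>2 - 4 * A * C) / (4 * C)"
  define s where "s = -B / (2 * C)"
  have "pcompose [:A, B, C:] [:s, 1:] = [:a, 0, C:]"
    by (rule poly_eq_poly_eq_iff[THEN iffD1], rule ext)
       (use C in \<open>simp add: poly_pcompose a_def s_def field_simps power2_eq_square\<close>)
  hence "pcompose ([:A, B, C:] ^ e) [:s, 1:] = [:a, 0, C:] ^ e"
    by (simp add: pcompose_power_left)
  moreover have "degree ([:A, B, C:] ^ e) \<le> 4 * e - 2 * j"
    using degree_quadratic_power[of A B C e] j by simp
  moreover have "4 * e - 2 * j = 2 * (2 * e - j)" by simp
  ultimately have "transvectant (4 * e - 2 * j) ([:A, B, C:] ^ e) = transvectant (2 * (2 * e - j)) ([:a, 0, C:] ^ e)"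
    using transvectant_shift by metis
  also have "\<dots> = of_nat (transvectant_const e (2 * e - j)) * a ^ j * C ^ (2 * e - j)"
    using j by (subst transvectant_even_power) auto
  also have "\<dots> = of_nat (transvectant_const e (2 * e - j)) * ((a * C) ^ j * C ^ (2 * e - 2 * j))"
  proof -
    have "C ^ (2 * e - j) = C ^ j * C ^ (2 * e - 2 * j)" using j by (simp flip: power_add)
    thus ?thesis by (simp add: power_mult_distrib mult_ac)
  qed
  also have "a * C = (-1/4) * (B\<^sup>2 - 4 * A * C)" using C by (simp add: a_def field_simps)
  finally show ?thesis by (simp only: kappa_def power_mult_distrib mult_ac)
qed

lemma transvectant_linear_power_vanishes:
  fixes A B :: "'a::field_char_0"
  assumes "2 * e < d"
  shows "transvectant d ([:A, B:] ^ e) = 0"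
  unfolding transvectant_def
proof (rule sum.neutral, rule ballI)
  fix k assume "k \<in> {..d}"
  hence "e < k \<or> e < d - k" using assms by auto
  thus "(-1) ^ k * fact k * fact (d - k) * coeff ([:A, B:] ^ e) k * coeff ([:A, B:] ^ e) (d - k) = 0"
    by (auto simp: coeff_linear_poly_power binomial_eq_0)
qed

lemma transvectant_linear_power:
  fixes A B :: "'a::field_char_0"
  shows "transvectant (2 * e) ([:A, B:] ^ e) = (-1) ^ e * fact e * fact e * B ^ (2 * e)"
proof -
  have "(-1) ^ k * fact k * fact (2 * e - k) * coeff ([:A, B:] ^ e) k * coeff ([:A, B:] ^ e) (2 * e - k)
      = (if k = e then (-1) ^ e * fact e * fact e * B ^ (2 * e) else 0)" for k
  proof (cases "k = e")
    case False
    hence "e < k \<or> e < 2 * e - k" by auto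
    thus ?thesis using False by (auto simp: coeff_linear_poly_power binomial_eq_0)
  qed (simp add: coeff_linear_poly_power mult_2 flip: power_add)
  thus ?thesis unfolding transvectant_def by simp
qed

text \<open>Evaluating both sides of \<open>transvectant_quadratic_power_nonzero\<close> at \<open>s (s + 2)\<close>.\<close>

lemma kappa_diag: "kappa e e = ((-1) ^ e * fact e * fact e :: 'a::field_char_0)"
proof -
  define u :: "'a poly" where "u = [:0, 2, 1:] ^ e"
  have "[:0, 2, 1:] = (monom 1 1 :: 'a poly) * [:2, 1:]"
    by (rule poly_eq_poly_eq_iff[THEN iffD1], rule ext) (simp add: poly_monom algebra_simps)
  hence "u = monom 1 e * [:2, 1:] ^ e" unfolding u_def by (simp only: power_mult_distrib monom_power) simp
  hence cu: "coeff u k = (if k < e then 0 else of_nat (e choose (k - e)) * 2 ^ (e - (k - e)))" for k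
    by (simp add: coeff_monom_mult coeff_linear_poly_power)
  have "(-1) ^ k * fact k * fact (2 * e - k) * coeff u k * coeff u (2 * e - k)
      = (if k = e then (-1) ^ e * fact e * fact e * 4 ^ e else 0)" if "k \<le> 2 * e" for k
  proof (cases "k = e")
    case True
    have "(2 :: 'a) ^ e * 2 ^ e = 4 ^ e" by (simp flip: power_mult_distrib)
    thus ?thesis using True by (simp add: cu mult_2)
  qed (use that in \<open>auto simp: cu\<close>)
  hence "transvectant (2 * e) u = (\<Sum>k\<le>2 * e. if k = e then (-1) ^ e * fact e * fact e * 4 ^ e else 0)"
    unfolding transvectant_def by (intro sum.cong) auto
  hence "transvectant (2 * e) u = (-1) ^ e * fact e * fact e * 4 ^ e" by simp
  moreover have "transvectant (4 * e - 2 * e) u = kappa e e * 1 ^ (2 * e - 2 * e) * (2\<^sup>2 - 4 * 0 * 1) ^ e"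
    unfolding u_def by (rule transvectant_quadratic_power_nonzero) auto
  ultimately show ?thesis by simp
qed

theorem transvectant_quadratic_power:
  fixes A B C :: "'a::field_char_0"
  assumes "j \<le> e"
  shows "transvectant (4 * e - 2 * j) ([:A, B, C:] ^ e) = kappa e j * C ^ (2 * e - 2 * j) * (B\<^sup>2 - 4 * A * C) ^ j"
proof (cases "C = 0")
  case True
  hence u: "[:A, B, C:] = [:A, B:]" by simp
  show ?thesis
  proof (cases "j < e")
    case True
    thus ?thesis using \<open>C = 0\<close> by (simp add: u transvectant_linear_power_vanishes)
  next
    case False
    hence "j = e" using assms by simp
    thus ?thesis using \<open>C = 0\<close> by (simp add: u transvectant_linear_power kappa_diag power_mult)
  qed
qed (rule transvectant_quadratic_power_nonzero[OF assms])

section \<open>Binary forms\<close>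

definition bin_A :: biform where "bin_A x y = x 0 * y 0"
definition bin_B :: biform where "bin_B x y = x 0 * y 1 + x 1 * y 0"
definition bin_C :: biform where "bin_C x y = x 1 * y 1"
definition bin_disc :: biform where "bin_disc x y = (x 0 * y 1 - x 1 * y 0)\<^sup>2"

lemma bin_disc_eq: "bin_disc x y = (bin_B x y)\<^sup>2 - 4 * bin_A x y * bin_C x y"
  by (simp add: bin_disc_def bin_A_def bin_B_def bin_C_def power2_eq_square algebra_simps)

text \<open>\<open>(x\<^sub>0 + s x\<^sub>1)(y\<^sub>0 + s y\<^sub>1) = A + B s + C s\<^sup>2\<close>, so the polar of \<open>(x\<^sub>0 + s x\<^sub>1)\<^bsup>2e\<^esup>\<close> is
  proportional to \<open>(A + B s + C s\<^sup>2)\<^sup>e\<close>, and comparing coefficients in \<open>s\<close> identifies the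
  polars of the monomials of degree \<open>2e\<close> with the coefficients \<open>polar_coeff e k\<close>.\<close>

definition polar_coeff :: "nat \<Rightarrow> nat \<Rightarrow> biform" where
  "polar_coeff e k x y = coeff ([:bin_A x y, bin_B x y, bin_C x y:] ^ e) k"

definition bin_monomial :: "nat \<Rightarrow> nat \<Rightarrow> form" where
  "bin_monomial m i x = x 0 ^ i * x 1 ^ (m - i)"

lemma xmono_eq_bin_monomial: "a \<in> exps 1 m \<Longrightarrow> xmono 1 a = bin_monomial m (a 0)"
proof -
  assume "a \<in> exps 1 m"
  hence "a (Suc 0) = m - a 0" using exps_1 by force
  thus ?thesis by (simp add: xmono_def bin_monomial_def atMost_Suc fun_eq_iff)
qed

lemma is_form_bin_monomial:
  assumes "i \<le> m"
  shows "is_form 1 m (bin_monomial m i)"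
proof -
  define a :: "nat \<Rightarrow> nat" where "a l = (if l = 0 then i else if l = 1 then m - i else 0)" for l
  have "a \<in> exps 1 m" using assms by (simp add: exps_def a_def atMost_Suc)
  thus ?thesis using xmono_eq_bin_monomial is_form_xmono by (metis a_def)
qed

lemma polar_power_lin_form:
  "polar e (\<lambda>z. lin_form n w z ^ (2 * e)) x y
     = fact e * of_nat (2 * e choose e) * (lin_form n w x * lin_form n w y) ^ e"
proof -
  have "polar e (\<lambda>z. lin_form n w z ^ (2 * e)) x y
      = fact e * coeff ([:lin_form n w x, lin_form n w y:] ^ (2 * e)) e"
    by (rule polar_eq_coeff) (simp add: lin_form_line mult.commute)
  thus ?thesis by (simp add: coeff_linear_poly_power power_mult_distrib mult_2)
qed

lemma polar_coeff_eq_0: "2 * e < k \<Longrightarrow> polar_coeff e k x y = 0"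
  unfolding polar_coeff_def by (intro coeff_eq_0 le_less_trans[OF degree_quadratic_power])

lemma polar_bin_monomial:
  assumes "k \<le> 2 * e"
  shows "of_nat (2 * e choose k) * polar e (bin_monomial (2 * e) (2 * e - k)) x y
    = fact e * of_nat (2 * e choose e) * polar_coeff e k x y"
proof -
  define w :: "complex \<Rightarrow> nat \<Rightarrow> complex" where "w s l = (if l = 0 then 1 else s)" for s l
  have w: "lin_form 1 (w s) z = z 0 + s * z 1" for s z
    by (simp add: lin_form_def w_def atMost_Suc)
  have "lin_form 1 (w s) z ^ (2 * e) = (\<Sum>k\<le>2 * e. (of_nat (2 * e choose k) * s ^ k) * bin_monomial (2 * e) (2 * e - k) z)"
    for s z
  proof -
    have "lin_form 1 (w s) z ^ (2 * e) = (\<Sum>k\<le>2 * e. of_nat (2 * e choose k) * (s * z 1) ^ k * z 0 ^ (2 * e - k))"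
      unfolding w using binomial_ring[of "s * z 1" "z 0"] by (simp add: add.commute)
    also have "\<dots> = (\<Sum>k\<le>2 * e. (of_nat (2 * e choose k) * s ^ k) * bin_monomial (2 * e) (2 * e - k) z)"
      by (intro sum.cong refl) (auto simp: bin_monomial_def power_mult_distrib)
    finally show ?thesis .
  qed
  hence "polar e (\<lambda>z. lin_form 1 (w s) z ^ (2 * e)) x y
      = (\<Sum>k\<le>2 * e. (of_nat (2 * e choose k) * s ^ k) * polar e (bin_monomial (2 * e) (2 * e - k)) x y)" for s
    by (simp only:) (rule polar_sum, auto intro: is_form_bin_monomial)
  moreover have "polar e (\<lambda>z. lin_form 1 (w s) z ^ (2 * e)) x y
      = (\<Sum>k\<le>2 * e. (fact e * of_nat (2 * e choose e) * polar_coeff e k x y) * s ^ k)" for s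
  proof -
    have "lin_form 1 (w s) x * lin_form 1 (w s) y = poly [:bin_A x y, bin_B x y, bin_C x y:] s"
      unfolding w by (simp add: bin_A_def bin_B_def bin_C_def algebra_simps power2_eq_square)
    hence "polar e (\<lambda>z. lin_form 1 (w s) z ^ (2 * e)) x y
        = fact e * of_nat (2 * e choose e) * poly ([:bin_A x y, bin_B x y, bin_C x y:] ^ e) s"
      by (simp add: polar_power_lin_form poly_power)
    thus ?thesis
      unfolding poly_eq_sum_atMost[OF degree_quadratic_power] polar_coeff_def sum_distrib_left
      by (simp only: mult.assoc)
  qed
  ultimately have "\<forall>s. (\<Sum>k\<le>2 * e. (of_nat (2 * e choose k) * polar e (bin_monomial (2 * e) (2 * e - k)) x y) * s ^ k)
      = (\<Sum>k\<le>2 * e. (fact e * of_nat (2 * e choose e) * polar_coeff e k x y) * s ^ k)"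
    by (simp add: mult_ac)
  thus ?thesis using assms by (subst (asm) polyfun_eq_coeffs) blast
qed

lemma alpha_span_polar_coeff: "alpha_span 1 e 1 (polar_coeff e k)"
proof (cases "k \<le> 2 * e")
  case True
  have "alpha_span 1 e 1 (\<lambda>x y. of_nat (2 * e choose k) / (fact e * of_nat (2 * e choose e))
      * polar e (bin_monomial (2 * e) (2 * e - k)) x y)"
    by (intro alpha_span_cmult alpha_span_polar is_form_bin_monomial) simp
  thus ?thesis by (rule alpha_span_cong) (use polar_bin_monomial[OF True] in \<open>simp add: field_simps\<close>)
next
  case False
  show ?thesis by (rule alpha_span_cong[OF alpha_span_zero]) (use False in \<open>simp add: polar_coeff_eq_0\<close>)
qed

lemma alpha_span_disc_power:
  assumes "j \<le> e"
  shows "alpha_span 1 e 2 (\<lambda>x y. bin_C x y ^ (2 * e - 2 * j) * bin_disc x y ^ j)"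
proof -
  define d where "d = 4 * e - 2 * j"
  have "alpha_span 1 e (1 + 1) (\<lambda>x y. \<Sum>k\<le>d. ((-1) ^ k * fact k * fact (d - k))
      * (polar_coeff e k x y * polar_coeff e (d - k) x y))"
    by (intro alpha_span_lincomb alpha_span_mult alpha_span_polar_coeff) simp
  moreover have "(\<Sum>k\<le>d. ((-1) ^ k * fact k * fact (d - k)) * (polar_coeff e k x y * polar_coeff e (d - k) x y))
      = kappa e j * (bin_C x y ^ (2 * e - 2 * j) * bin_disc x y ^ j)" for x y
    using transvectant_quadratic_power[OF assms, of "bin_A x y" "bin_B x y" "bin_C x y"]
    by (simp add: transvectant_def polar_coeff_def d_def bin_disc_eq mult_ac)
  ultimately have "alpha_span 1 e 2 (\<lambda>x y. kappa e j * (bin_C x y ^ (2 * e - 2 * j) * bin_disc x y ^ j))"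
    by (simp add: alpha_span_cong numeral_2_eq_2)
  hence "alpha_span 1 e 2 (\<lambda>x y. 1 / kappa e j * (kappa e j * (bin_C x y ^ (2 * e - 2 * j) * bin_disc x y ^ j)))"
    by (rule alpha_span_cmult)
  thus ?thesis using kappa_nonzero[OF assms, where 'a = complex] by simp
qed

section \<open>Symmetrized binary monomials in the span for \<open>r = 2\<close>\<close>

definition sym_bin_monomial :: "nat \<Rightarrow> nat \<Rightarrow> nat \<Rightarrow> biform" where
  "sym_bin_monomial m i k x y = bin_monomial m i x * bin_monomial m k y + bin_monomial m k x * bin_monomial m i y"

lemma sym_bin_monomial_commute: "sym_bin_monomial m i k = sym_bin_monomial m k i"
  by (simp add: sym_bin_monomial_def fun_eq_iff add.commute)

lemma sum_atMost_reflect: "(\<Sum>i\<le>k. f (k - i)) = (\<Sum>i\<le>k. f i)" for k :: nat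
  by (rule sum.reindex_bij_witness[where i = "\<lambda>i. k - i" and j = "\<lambda>i. k - i"]) auto

lemma sum_bin_monomial_pairs:
  "(\<Sum>i\<le>t. bin_monomial m (a + i) x * bin_monomial m (a + t - i) y)
    = (\<Sum>i\<le>t. 1/2 * sym_bin_monomial m (a + i) (a + t - i) x y)"
proof -
  have "(\<Sum>i\<le>t. bin_monomial m (a + t - i) x * bin_monomial m (a + i) y)
      = (\<Sum>i\<le>t. bin_monomial m (a + i) x * bin_monomial m (a + t - i) y)"
    using sum_atMost_reflect[of "\<lambda>i. bin_monomial m (a + i) x * bin_monomial m (a + t - i) y" t]
    by (simp add: add.assoc)
  moreover have "(\<Sum>i\<le>t. 1/2 * sym_bin_monomial m (a + i) (a + t - i) x y)
      = 1/2 * ((\<Sum>i\<le>t. bin_monomial m (a + i) x * bin_monomial m (a + t - i) y)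
        + (\<Sum>i\<le>t. bin_monomial m (a + t - i) x * bin_monomial m (a + i) y))"
    by (simp only: sym_bin_monomial_def sum.distrib sum_distrib_left[symmetric])
  ultimately show ?thesis by simp
qed

text \<open>With \<open>p = x\<^sub>0 y\<^sub>1\<close> and \<open>q = x\<^sub>1 y\<^sub>0\<close> this is
  \<open>p\<^bsup>t+2\<^esup> + q\<^bsup>t+2\<^esup> - p q (p\<^sup>t + q\<^sup>t) = (p - q)\<^sup>2 (p\<^sup>t + p\<^bsup>t-1\<^esup> q + \<dots> + q\<^sup>t)\<close>,
  multiplied by \<open>(x\<^sub>0 y\<^sub>0)\<^sup>a (x\<^sub>1 y\<^sub>1)\<^sup>b\<close>.\<close>

lemma sym_bin_monomial_diff:
  fixes x y :: "nat \<Rightarrow> complex" and a b t :: nat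
  defines "m \<equiv> a + b + t + 2"
  shows "sym_bin_monomial m (a + t + 2) a x y - sym_bin_monomial m (a + t + 1) (a + 1) x y
    = bin_disc x y * (\<Sum>i\<le>t. 1/2 * sym_bin_monomial (m - 2) (a + i) (a + t - i) x y)"
proof -
  define p where "p = x 0 * y 1"
  define q where "q = x 1 * y 0"
  define M where "M = (x 0 * y 0) ^ a * (x 1 * y 1) ^ b"
  have "sym_bin_monomial m (a + t + 2) a x y = M * (p ^ (t + 2) + q ^ (t + 2))"
    by (simp add: sym_bin_monomial_def bin_monomial_def m_def M_def p_def q_def power_add
        power_mult_distrib distrib_left mult_ac)
  moreover have "sym_bin_monomial m (a + t + 1) (a + 1) x y = M * (p * q * (p ^ t + q ^ t))"
    by (simp add: sym_bin_monomial_def bin_monomial_def m_def M_def p_def q_def power_add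
        power_mult_distrib distrib_left mult_ac)
  ultimately have "sym_bin_monomial m (a + t + 2) a x y - sym_bin_monomial m (a + t + 1) (a + 1) x y
      = M * (p ^ (t + 2) + q ^ (t + 2) - p * q * (p ^ t + q ^ t))"
    by (simp add: right_diff_distrib)
  also have "p ^ (t + 2) + q ^ (t + 2) - p * q * (p ^ t + q ^ t) = (p - q) * (p ^ Suc t - q ^ Suc t)"
    by (simp add: algebra_simps)
  also have "p ^ Suc t - q ^ Suc t = (p - q) * (\<Sum>i\<le>t. p ^ i * q ^ (t - i))"
    using power_diff_sumr2[of p "Suc t" q] by (simp add: lessThan_Suc_atMost mult.commute)
  also have "M * ((p - q) * ((p - q) * (\<Sum>i\<le>t. p ^ i * q ^ (t - i))))
      = (p - q)\<^sup>2 * (\<Sum>i\<le>t. M * (p ^ i * q ^ (t - i)))"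
    by (simp add: sum_distrib_left power2_eq_square mult_ac)
  also have "(\<Sum>i\<le>t. M * (p ^ i * q ^ (t - i)))
      = (\<Sum>i\<le>t. bin_monomial (m - 2) (a + i) x * bin_monomial (m - 2) (a + t - i) y)"
  proof (intro sum.cong refl)
    fix i assume "i \<in> {..t}"
    hence "m - 2 - (a + i) = b + (t - i)" "a + t - i = a + (t - i)" "m - 2 - (a + (t - i)) = b + i"
      by (auto simp: m_def)
    thus "M * (p ^ i * q ^ (t - i)) = bin_monomial (m - 2) (a + i) x * bin_monomial (m - 2) (a + t - i) y"
      by (simp add: bin_monomial_def M_def p_def q_def power_add power_mult_distrib mult_ac)
  qed
  finally show ?thesis by (simp only: sum_bin_monomial_pairs bin_disc_def p_def q_def)
qed

definition disc_sym_in_span :: "nat \<Rightarrow> nat \<Rightarrow> nat \<Rightarrow> bool" where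
  "disc_sym_in_span e j m \<longleftrightarrow>
     (\<forall>k1\<le>m. \<forall>k2\<le>m. alpha_span 1 e 2 (\<lambda>x y. bin_disc x y ^ j * sym_bin_monomial m k1 k2 x y))"

lemma alpha_span_disc_sym_shift:
  assumes "disc_sym_in_span e (Suc j) (m - 2)" "k2 + 2 \<le> k1" "k1 \<le> m"
  shows "alpha_span 1 e 2 (\<lambda>x y. bin_disc x y ^ j * sym_bin_monomial m k1 k2 x y
                                 - bin_disc x y ^ j * sym_bin_monomial m (k1 - 1) (k2 + 1) x y)"
proof -
  define t where "t = k1 - k2 - 2"
  define b where "b = m - k1"
  have tb: "k1 = k2 + t + 2" "m = k2 + b + t + 2" using assms(2,3) by (simp_all add: t_def b_def)
  have eq: "bin_disc x y ^ j * sym_bin_monomial m k1 k2 x y - bin_disc x y ^ j * sym_bin_monomial m (k1 - 1) (k2 + 1) x y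
      = (\<Sum>i\<le>t. 1/2 * (bin_disc x y ^ Suc j * sym_bin_monomial (m - 2) (k2 + i) (k2 + t - i) x y))" for x y
  proof -
    have "bin_disc x y ^ j * sym_bin_monomial m k1 k2 x y - bin_disc x y ^ j * sym_bin_monomial m (k1 - 1) (k2 + 1) x y
        = bin_disc x y ^ j * (sym_bin_monomial m k1 k2 x y - sym_bin_monomial m (k1 - 1) (k2 + 1) x y)"
      by (simp add: right_diff_distrib)
    also have "\<dots> = bin_disc x y ^ Suc j * (\<Sum>i\<le>t. 1/2 * sym_bin_monomial (m - 2) (k2 + i) (k2 + t - i) x y)"
      using sym_bin_monomial_diff[of k2 b t x y] by (simp add: tb add.assoc)
    finally show ?thesis by (simp add: sum_distrib_left)
  qed
  have "alpha_span 1 e 2 (\<lambda>x y. \<Sum>i\<le>t. 1/2 * (bin_disc x y ^ Suc j * sym_bin_monomial (m - 2) (k2 + i) (k2 + t - i) x y))"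
    using assms(1) unfolding disc_sym_in_span_def by (intro alpha_span_lincomb) (auto simp: tb)
  thus ?thesis by (rule alpha_span_cong) (rule eq[symmetric])
qed

lemma alpha_span_disc_sym_minus_center_le:
  assumes IH: "2 \<le> m \<Longrightarrow> disc_sym_in_span e (Suc j) (m - 2)" and "i \<le> k div 2" "k - i \<le> m"
  shows "alpha_span 1 e 2 (\<lambda>x y. bin_disc x y ^ j * sym_bin_monomial m (k - i) i x y
                                 - bin_disc x y ^ j * sym_bin_monomial m (k - k div 2) (k div 2) x y)"
proof -
  define f where "f t x y = bin_disc x y ^ j * sym_bin_monomial m (k - t) t x y" for t x y
  have "alpha_span 1 e 2 (\<lambda>x y. \<Sum>t\<in>{i..<k div 2}. f t x y - f (Suc t) x y)"
  proof (intro alpha_span_sum)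
    fix t assume "t \<in> {i..<k div 2}"
    hence t: "t + 2 \<le> k - t" "k - t \<le> m" using assms(3) by auto
    hence "alpha_span 1 e 2 (\<lambda>x y. bin_disc x y ^ j * sym_bin_monomial m (k - t) t x y
                                 - bin_disc x y ^ j * sym_bin_monomial m (k - t - 1) (t + 1) x y)"
      using IH by (intro alpha_span_disc_sym_shift) auto
    thus "alpha_span 1 e 2 (\<lambda>x y. f t x y - f (Suc t) x y)" by (simp add: f_def)
  qed simp
  moreover have "(\<Sum>t\<in>{i..<k div 2}. f t x y - f (Suc t) x y) = f i x y - f (k div 2) x y" for x y
    using sum_Suc_diff'[of i "k div 2" "\<lambda>t. - f t x y"] assms(2) by simp
  ultimately show ?thesis by (simp add: f_def alpha_span_cong)
qed

text \<open>\<open>C((x\<^sub>0, x\<^sub>1 + s x\<^sub>0), (y\<^sub>0, y\<^sub>1 + s y\<^sub>0))\<^sup>m = \<Sum>\<^sub>k shifted_C_coeff m k x y s\<^sup>k\<close>.\<close>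

definition shifted_C_coeff :: "nat \<Rightarrow> nat \<Rightarrow> biform" where
  "shifted_C_coeff m k x y = coeff ([:x 1, x 0:] ^ m * [:y 1, y 0:] ^ m) k"

lemma shifted_C_coeff_eq:
  "2 * shifted_C_coeff m k x y
    = (\<Sum>i\<le>k. of_nat (m choose i) * of_nat (m choose (k - i)) * sym_bin_monomial m i (k - i) x y)"
proof -
  define c :: "nat \<Rightarrow> complex" where "c i = of_nat (m choose i) * of_nat (m choose (k - i))" for i
  have "shifted_C_coeff m k x y = (\<Sum>i\<le>k. c i * (bin_monomial m i x * bin_monomial m (k - i) y))"
    unfolding shifted_C_coeff_def coeff_mult
    by (intro sum.cong refl) (simp add: coeff_linear_poly_power bin_monomial_def c_def mult_ac)
  moreover have "\<dots> = (\<Sum>i\<le>k. c i * (bin_monomial m (k - i) x * bin_monomial m i y))"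
    using sum_atMost_reflect[of "\<lambda>i. c i * (bin_monomial m (k - i) x * bin_monomial m i y)" k]
    by (simp add: c_def mult.commute)
  ultimately have "2 * shifted_C_coeff m k x y
      = (\<Sum>i\<le>k. c i * (bin_monomial m i x * bin_monomial m (k - i) y))
        + (\<Sum>i\<le>k. c i * (bin_monomial m (k - i) x * bin_monomial m i y))"
    by simp
  also have "\<dots> = (\<Sum>i\<le>k. c i * sym_bin_monomial m i (k - i) x y)"
    by (simp add: sym_bin_monomial_def sum.distrib distrib_left)
  finally show ?thesis by (simp add: c_def)
qed

lemma degree_linear_poly_power: "degree ([:a, b:] ^ m) \<le> m"
proof -
  have "degree ([:a, b:] ^ m) \<le> degree [:a, b:] * m" by (rule degree_power_le)
  also have "\<dots> \<le> m" by (cases "b = 0") auto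
  finally show ?thesis .
qed

lemma degree_shifted_C_poly: "degree ([:a, b:] ^ m * [:c, d:] ^ m) \<le> 2 * m"
  using degree_mult_le[of "[:a, b:] ^ m" "[:c, d:] ^ m"] degree_linear_poly_power[of a b m]
    degree_linear_poly_power[of c d m] by linarith

lemma bin_C_shear_power:
  assumes "u 0 = x 0" "u 1 = s * x 0 + x 1" "u' 0 = y 0" "u' 1 = s * y 0 + y 1"
  shows "bin_C u u' ^ m = (\<Sum>i\<le>2 * m. shifted_C_coeff m i x y * s ^ i)"
proof -
  have "bin_C u u' = poly [:x 1, x 0:] s * poly [:y 1, y 0:] s"
    unfolding bin_C_def assms by (simp add: algebra_simps)
  hence "bin_C u u' ^ m = poly ([:x 1, x 0:] ^ m * [:y 1, y 0:] ^ m) s"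
    by (simp only: power_mult_distrib poly_mult poly_power)
  thus ?thesis
    unfolding poly_eq_sum_atMost[OF degree_shifted_C_poly] shifted_C_coeff_def .
qed

lemma bin_disc_shear:
  assumes "u 0 = x 0" "u 1 = s * x 0 + x 1" "u' 0 = y 0" "u' 1 = s * y 0 + y 1"
  shows "bin_disc u u' = bin_disc x y"
  unfolding bin_disc_def assms by (simp add: algebra_simps)

lemma alpha_span_disc_shifted_C_coeff:
  assumes "j \<le> e" "m = 2 * e - 2 * j"
  shows "alpha_span 1 e 2 (\<lambda>x y. bin_disc x y ^ j * shifted_C_coeff m k x y)"
proof (cases "k \<le> 2 * m")
  case True
  define v :: "nat \<Rightarrow> complex" where "v l = (if l = 0 then 1 else 0)" for l
  define w :: "complex \<Rightarrow> nat \<Rightarrow> complex" where "w s l = (if l = 0 then s else 1)" for s l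
  have subst: "binary_subst 1 v (w s) z 0 = z 0" "binary_subst 1 v (w s) z 1 = s * z 0 + z 1" for s z
    by (simp_all add: binary_subst_def v_def w_def lin_form_def atMost_Suc)
  have "alpha_span 1 e 2 (\<lambda>x y. \<Sum>i<Suc (2 * m). (bin_disc x y ^ j * shifted_C_coeff m i x y) * s ^ i)" for s
  proof -
    have "alpha_span 1 e 2 (\<lambda>x y. bin_C (binary_subst 1 v (w s) x) (binary_subst 1 v (w s) y) ^ m
        * bin_disc (binary_subst 1 v (w s) x) (binary_subst 1 v (w s) y) ^ j)"
      using alpha_span_binary_subst[OF alpha_span_disc_power[OF assms(1)], where n = 1 and v = v and w = "w s"]
      by (simp add: assms(2))
    moreover have C: "bin_C (binary_subst 1 v (w s) x) (binary_subst 1 v (w s) y) ^ m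
        = (\<Sum>i\<le>2 * m. shifted_C_coeff m i x y * s ^ i)" for x y
      by (rule bin_C_shear_power; rule subst)
    moreover have D: "bin_disc (binary_subst 1 v (w s) x) (binary_subst 1 v (w s) y) = bin_disc x y" for x y
      by (rule bin_disc_shear; rule subst)
    ultimately show ?thesis
      by (elim alpha_span_cong) (unfold C D lessThan_Suc_atMost sum_distrib_right, simp add: mult_ac)
  qed
  thus ?thesis
    by (rule alpha_span_coeff[where c = "\<lambda>i x y. bin_disc x y ^ j * shifted_C_coeff m i x y"
          and N = "Suc (2 * m)"]) (use True in simp)
next
  case False
  have "shifted_C_coeff m k x y = 0" for x y
    unfolding shifted_C_coeff_def
    by (intro coeff_eq_0 le_less_trans[OF degree_shifted_C_poly]) (use False in simp)
  thus ?thesis by (simp add: alpha_span_zero)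
qed

lemma alpha_span_disc_sym_minus_center:
  assumes IH: "2 \<le> m \<Longrightarrow> disc_sym_in_span e (Suc j) (m - 2)" and "i \<le> k" "i \<le> m" "k - i \<le> m"
  shows "alpha_span 1 e 2 (\<lambda>x y. bin_disc x y ^ j * sym_bin_monomial m i (k - i) x y
                                 - bin_disc x y ^ j * sym_bin_monomial m (k - k div 2) (k div 2) x y)"
proof (cases "i \<le> k div 2")
  case True
  thus ?thesis
    using alpha_span_disc_sym_minus_center_le[OF IH True assms(4)] by (simp add: sym_bin_monomial_commute[of m i])
next
  case False
  thus ?thesis
    using alpha_span_disc_sym_minus_center_le[OF IH, of "k - i" k] assms(2,3) by simp
qed

lemma alpha_span_disc_sym_center:
  assumes "j \<le> e" "m = 2 * e - 2 * j" and IH: "2 \<le> m \<Longrightarrow> disc_sym_in_span e (Suc j) (m - 2)"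
    and "k \<le> 2 * m"
  shows "alpha_span 1 e 2 (\<lambda>x y. bin_disc x y ^ j * sym_bin_monomial m (k - k div 2) (k div 2) x y)"
proof (rule alpha_span_of_congruent[where S = "{..k}" and c = "\<lambda>i. of_nat ((m choose i) * (m choose (k - i)))"
      and F = "\<lambda>i x y. bin_disc x y ^ j * sym_bin_monomial m i (k - i) x y"])
  have "alpha_span 1 e 2 (\<lambda>x y. 2 * (bin_disc x y ^ j * shifted_C_coeff m k x y))"
    by (intro alpha_span_cmult alpha_span_disc_shifted_C_coeff assms(1,2))
  thus "alpha_span 1 e 2 (\<lambda>x y. \<Sum>i\<le>k. of_nat ((m choose i) * (m choose (k - i)))
      * (bin_disc x y ^ j * sym_bin_monomial m i (k - i) x y))"
  proof (rule alpha_span_cong)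
    fix x y
    have "2 * (bin_disc x y ^ j * shifted_C_coeff m k x y) = bin_disc x y ^ j * (2 * shifted_C_coeff m k x y)"
      by (simp only: mult.left_commute)
    thus "2 * (bin_disc x y ^ j * shifted_C_coeff m k x y) = (\<Sum>i\<le>k. of_nat ((m choose i) * (m choose (k - i)))
        * (bin_disc x y ^ j * sym_bin_monomial m i (k - i) x y))"
      unfolding shifted_C_coeff_eq sum_distrib_left by (simp add: mult_ac)
  qed
  show "(\<Sum>i\<le>k. of_nat ((m choose i) * (m choose (k - i))) :: complex) \<noteq> 0"
    using assms(4) by (simp only: of_nat_sum[symmetric] vandermonde) simp
next
  fix i assume "i \<in> {..k}" "of_nat ((m choose i) * (m choose (k - i))) \<noteq> (0 :: complex)"
  hence "i \<le> k" "i \<le> m" "k - i \<le> m" by (auto simp: binomial_eq_0_iff)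
  thus "alpha_span 1 e 2 (\<lambda>x y. bin_disc x y ^ j * sym_bin_monomial m i (k - i) x y
      - bin_disc x y ^ j * sym_bin_monomial m (k - k div 2) (k div 2) x y)"
    by (intro alpha_span_disc_sym_minus_center IH)
qed simp

lemma disc_sym_in_span_step:
  assumes "j \<le> e" "m = 2 * e - 2 * j" "2 \<le> m \<Longrightarrow> disc_sym_in_span e (Suc j) (m - 2)"
  shows "disc_sym_in_span e j m"
  unfolding disc_sym_in_span_def
proof (intro allI impI)
  fix k1 k2 assume k: "k1 \<le> m" "k2 \<le> m"
  have "alpha_span 1 e 2 (\<lambda>x y. (bin_disc x y ^ j * sym_bin_monomial m k1 (k1 + k2 - k1) x y
        - bin_disc x y ^ j * sym_bin_monomial m (k1 + k2 - (k1 + k2) div 2) ((k1 + k2) div 2) x y)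
      + bin_disc x y ^ j * sym_bin_monomial m (k1 + k2 - (k1 + k2) div 2) ((k1 + k2) div 2) x y)"
    using k by (intro alpha_span_add alpha_span_disc_sym_minus_center alpha_span_disc_sym_center assms(1,2,3)) auto
  thus "alpha_span 1 e 2 (\<lambda>x y. bin_disc x y ^ j * sym_bin_monomial m k1 k2 x y)" by simp
qed

lemma disc_sym_in_span: "t \<le> e \<Longrightarrow> disc_sym_in_span e (e - t) (2 * t)"
proof (induction t)
  case 0
  show ?case by (rule disc_sym_in_span_step) auto
next
  case (Suc t)
  show ?case by (rule disc_sym_in_span_step) (use Suc in \<open>auto simp: Suc_diff_Suc\<close>)
qed

lemma alpha_span_sym_bin_monomial:
  "k1 \<le> 2 * e \<Longrightarrow> k2 \<le> 2 * e \<Longrightarrow> alpha_span 1 e 2 (sym_bin_monomial (2 * e) k1 k2)"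
  using disc_sym_in_span[of e e] by (simp add: disc_sym_in_span_def)

section \<open>Polynomials in \<open>A\<close>, \<open>B\<close>, \<open>C\<close>\<close>

inductive ABC_poly :: "nat \<Rightarrow> biform \<Rightarrow> bool" where
  ABC_monomial: "ABC_poly (a + b + c) (\<lambda>x y. bin_A x y ^ a * bin_B x y ^ b * bin_C x y ^ c)"
| ABC_add: "ABC_poly m f \<Longrightarrow> ABC_poly m g \<Longrightarrow> ABC_poly m (\<lambda>x y. f x y + g x y)"
| ABC_cmult: "ABC_poly m f \<Longrightarrow> ABC_poly m (\<lambda>x y. s * f x y)"

lemma ABC_poly_cong: "ABC_poly m f \<Longrightarrow> (\<And>x y. f x y = g x y) \<Longrightarrow> ABC_poly m g"
  by (metis ext)

lemma ABC_poly_A: "ABC_poly 1 bin_A" and ABC_poly_B: "ABC_poly 1 bin_B" and ABC_poly_C: "ABC_poly 1 bin_C"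
  using ABC_monomial[of 1 0 0] ABC_monomial[of 0 1 0] ABC_monomial[of 0 0 1] by (simp_all add: ABC_poly_cong)

lemma ABC_poly_const: "ABC_poly 0 (\<lambda>x y. s)"
  using ABC_cmult[OF ABC_monomial[of 0 0 0], of s] by simp

lemma ABC_poly_zero: "ABC_poly m (\<lambda>x y. 0)"
  using ABC_cmult[OF ABC_monomial[of m 0 0], of 0] by simp

lemma ABC_poly_lincomb:
  "finite S \<Longrightarrow> (\<And>i. i \<in> S \<Longrightarrow> ABC_poly m (f i)) \<Longrightarrow> ABC_poly m (\<lambda>x y. \<Sum>i\<in>S. c i * f i x y)"
  by (induction S rule: finite_induct) (simp_all add: ABC_poly_zero ABC_add ABC_cmult)

lemma ABC_poly_mult_monomial:
  assumes "ABC_poly m g"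
  shows "ABC_poly (a + b + c + m) (\<lambda>x y. (bin_A x y ^ a * bin_B x y ^ b * bin_C x y ^ c) * g x y)"
  using assms
proof (induction rule: ABC_poly.induct)
  case (ABC_monomial a' b' c')
  have "ABC_poly ((a + a') + (b + b') + (c + c')) (\<lambda>x y. bin_A x y ^ (a + a') * bin_B x y ^ (b + b') * bin_C x y ^ (c + c'))"
    by (rule ABC_poly.ABC_monomial)
  thus ?case by (simp add: power_add ac_simps)
next
  case (ABC_add m f g)
  thus ?case by (simp add: distrib_left ABC_poly.ABC_add)
next
  case (ABC_cmult m f s)
  thus ?case using ABC_poly.ABC_cmult[OF ABC_cmult.IH, of s] by (simp add: mult_ac)
qed

lemma ABC_poly_mult:
  assumes "ABC_poly m f" "ABC_poly m' g"
  shows "ABC_poly (m + m') (\<lambda>x y. f x y * g x y)"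
  using assms(1)
proof (induction rule: ABC_poly.induct)
  case (ABC_monomial a b c)
  thus ?case using ABC_poly_mult_monomial[OF assms(2)] by simp
next
  case (ABC_add m f1 f2)
  thus ?case by (simp add: distrib_right ABC_poly.ABC_add)
next
  case (ABC_cmult m f s)
  thus ?case using ABC_poly.ABC_cmult[OF ABC_cmult.IH, of s] by (simp add: mult.assoc)
qed

lemma ABC_poly_power: "ABC_poly m f \<Longrightarrow> ABC_poly (k * m) (\<lambda>x y. f x y ^ k)"
  by (induction k) (simp_all add: ABC_poly_const ABC_poly_mult)

text \<open>Newton's recursion \<open>p\<^bsup>d+2\<^esup> + q\<^bsup>d+2\<^esup> = (p + q)(p\<^bsup>d+1\<^esup> + q\<^bsup>d+1\<^esup>) - p q (p\<^sup>d + q\<^sup>d)\<close>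
  for \<open>p = x\<^sub>0 y\<^sub>1\<close>, \<open>q = x\<^sub>1 y\<^sub>0\<close>, where \<open>p + q = B\<close> and \<open>p q = A C\<close>.\<close>

lemma ABC_poly_power_sum: "ABC_poly d (\<lambda>x y. (x 0 * y 1) ^ d + (x 1 * y 0) ^ d)"
proof (induction d rule: less_induct)
  case (less d)
  show ?case
  proof (cases "d < 2")
    case True
    hence "d = 0 \<or> d = 1" by auto
    thus ?thesis using ABC_poly_const[of 2] ABC_poly_cong[OF ABC_poly_B, of "\<lambda>x y. x 0 * y 1 + x 1 * y 0"]
      by (auto simp: bin_B_def)
  next
    case False
    define d' where "d' = d - 2"
    have d: "d = Suc (Suc d')" using False by (simp add: d'_def)
    have "ABC_poly (1 + Suc d') (\<lambda>x y. bin_B x y * ((x 0 * y 1) ^ Suc d' + (x 1 * y 0) ^ Suc d'))"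
      by (intro ABC_poly_mult ABC_poly_B less.IH) (simp add: d)
    moreover have "ABC_poly ((1 + 1) + d') (\<lambda>x y. (bin_A x y * bin_C x y) * ((x 0 * y 1) ^ d' + (x 1 * y 0) ^ d'))"
      by (intro ABC_poly_mult ABC_poly_A ABC_poly_C less.IH) (simp add: d)
    ultimately have "ABC_poly d (\<lambda>x y. bin_B x y * ((x 0 * y 1) ^ Suc d' + (x 1 * y 0) ^ Suc d')
        + (-1) * ((bin_A x y * bin_C x y) * ((x 0 * y 1) ^ d' + (x 1 * y 0) ^ d')))"
      unfolding d by (intro ABC_add ABC_cmult) simp_all
    thus ?thesis
      by (rule ABC_poly_cong) (simp add: d bin_A_def bin_B_def bin_C_def algebra_simps)
  qed
qed

lemma ABC_poly_sym_bin_monomial: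
  assumes "k1 \<le> m" "k2 \<le> m"
  shows "ABC_poly m (sym_bin_monomial m k1 k2)"
proof -
  have le: "ABC_poly m (sym_bin_monomial m k1 k2)" if "k2 \<le> k1" "k1 \<le> m" for k1 k2
  proof -
    define d where "d = k1 - k2"
    define c where "c = m - k1"
    have k: "k1 = k2 + d" "m = k2 + d + c" using that by (simp_all add: d_def c_def)
    have "ABC_poly (k2 + 0 + c + d) (\<lambda>x y. (bin_A x y ^ k2 * bin_B x y ^ 0 * bin_C x y ^ c)
        * ((x 0 * y 1) ^ d + (x 1 * y 0) ^ d))"
      by (intro ABC_poly_mult_monomial ABC_poly_power_sum)
    hence "ABC_poly m (\<lambda>x y. (bin_A x y ^ k2 * bin_B x y ^ 0 * bin_C x y ^ c)
        * ((x 0 * y 1) ^ d + (x 1 * y 0) ^ d))"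
      by (simp add: k ac_simps)
    thus ?thesis unfolding k
      by (rule ABC_poly_cong) (simp add: sym_bin_monomial_def bin_monomial_def bin_A_def bin_C_def
          power_add power_mult_distrib algebra_simps)
  qed
  show ?thesis
  proof (cases "k2 \<le> k1")
    case False
    thus ?thesis using le[of k1 k2] assms by (simp add: sym_bin_monomial_commute)
  qed (use le assms in simp)
qed

lemma ABC_monomial_expand:
  "bin_A x y ^ a * bin_B x y ^ b * bin_C x y ^ c
    = (\<Sum>t\<le>b. of_nat (b choose t) * (bin_monomial (a + b + c) (a + t) x * bin_monomial (a + b + c) (a + b - t) y))"
proof -
  have "bin_B x y ^ b = (\<Sum>t\<le>b. of_nat (b choose t) * (x 0 * y 1) ^ t * (x 1 * y 0) ^ (b - t))"
    unfolding bin_B_def by (rule binomial_ring)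
  hence "bin_A x y ^ a * bin_B x y ^ b * bin_C x y ^ c
      = (\<Sum>t\<le>b. bin_A x y ^ a * (of_nat (b choose t) * (x 0 * y 1) ^ t * (x 1 * y 0) ^ (b - t)) * bin_C x y ^ c)"
    by (simp add: sum_distrib_left sum_distrib_right)
  also have "\<dots> = (\<Sum>t\<le>b. of_nat (b choose t) * (bin_monomial (a + b + c) (a + t) x * bin_monomial (a + b + c) (a + b - t) y))"
  proof (intro sum.cong refl)
    fix t assume "t \<in> {..b}"
    hence e: "a + b - t = a + (b - t)" "a + b + c - (a + t) = c + (b - t)" "a + b + c - (a + (b - t)) = c + t"
      by auto
    show "bin_A x y ^ a * (of_nat (b choose t) * (x 0 * y 1) ^ t * (x 1 * y 0) ^ (b - t)) * bin_C x y ^ c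
        = of_nat (b choose t) * (bin_monomial (a + b + c) (a + t) x * bin_monomial (a + b + c) (a + b - t) y)"
      unfolding bin_monomial_def e by (simp add: bin_A_def bin_C_def power_add power_mult_distrib mult_ac)
  qed
  finally show ?thesis .
qed

text \<open>\<open>A\<close>, \<open>B\<close>, \<open>C\<close> are symmetric in \<open>x\<close> and \<open>y\<close>, so adding the expansion at \<open>(x, y)\<close> and at
  \<open>(y, x)\<close> writes twice a monomial as a combination of symmetrized binary monomials.\<close>

lemma ABC_monomial_eq_sym_sum:
  "2 * (bin_A x y ^ a * bin_B x y ^ b * bin_C x y ^ c)
    = (\<Sum>t\<le>b. of_nat (b choose t) * sym_bin_monomial (a + b + c) (a + t) (a + b - t) x y)"
proof -
  have "bin_A x y ^ a * bin_B x y ^ b * bin_C x y ^ c = bin_A y x ^ a * bin_B y x ^ b * bin_C y x ^ c"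
    by (simp add: bin_A_def bin_B_def bin_C_def mult.commute add.commute)
  thus ?thesis
    using ABC_monomial_expand[of x y a b c] ABC_monomial_expand[of y x a b c]
    by (simp add: sym_bin_monomial_def distrib_left sum.distrib mult_ac)
qed

lemma alpha_span_ABC_poly_2: "ABC_poly (2 * e) f \<Longrightarrow> alpha_span 1 e 2 f"
proof (induction "2 * e" f rule: ABC_poly.induct)
  case (ABC_monomial a b c)
  hence abc: "a + b + c = 2 * e" by simp
  have "alpha_span 1 e 2 (\<lambda>x y. \<Sum>t\<le>b. (1/2 * of_nat (b choose t)) * sym_bin_monomial (2 * e) (a + t) (a + b - t) x y)"
    using abc by (intro alpha_span_lincomb alpha_span_sym_bin_monomial) auto
  moreover have "(\<Sum>t\<le>b. (1/2 * of_nat (b choose t)) * sym_bin_monomial (2 * e) (a + t) (a + b - t) x y)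
      = bin_A x y ^ a * bin_B x y ^ b * bin_C x y ^ c" for x y
  proof -
    have "(\<Sum>t\<le>b. (1/2 * of_nat (b choose t)) * sym_bin_monomial (2 * e) (a + t) (a + b - t) x y)
        = 1/2 * (\<Sum>t\<le>b. of_nat (b choose t) * sym_bin_monomial (2 * e) (a + t) (a + b - t) x y)"
      by (simp only: sum_distrib_left mult.assoc)
    also have "\<dots> = 1/2 * (2 * (bin_A x y ^ a * bin_B x y ^ b * bin_C x y ^ c))"
      by (simp only: ABC_monomial_eq_sym_sum[of x y a b c, unfolded abc])
    finally show ?thesis by simp
  qed
  ultimately show ?case by (rule alpha_span_cong)
qed (simp_all add: alpha_span_add alpha_span_cmult)

lemma ABC_poly_polar_coeff: "ABC_poly e (polar_coeff e k)"
proof (cases "k \<le> 2 * e")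
  case True
  define N where "N = Suc (2 * e)"
  define \<omega> where "\<omega> j = unit_root N ^ j" for j
  have "ABC_poly e (\<lambda>x y. \<Sum>j<N. (\<omega> j ^ (N - k) / N) * (bin_A x y + \<omega> j * bin_B x y + \<omega> j ^ 2 * bin_C x y) ^ e)"
    using ABC_poly_power[OF ABC_add[OF ABC_add[OF ABC_poly_A ABC_cmult[OF ABC_poly_B]] ABC_cmult[OF ABC_poly_C]]]
    by (intro ABC_poly_lincomb) simp_all
  moreover have "(\<Sum>j<N. (\<omega> j ^ (N - k) / N) * (bin_A x y + \<omega> j * bin_B x y + \<omega> j ^ 2 * bin_C x y) ^ e)
      = polar_coeff e k x y" for x y
  proof -
    define u where "u = [:bin_A x y, bin_B x y, bin_C x y:] ^ e"
    have "(\<Sum>i<N. coeff u i * s ^ i) = (bin_A x y + s * bin_B x y + s ^ 2 * bin_C x y) ^ e" for s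
      unfolding N_def lessThan_Suc_atMost u_def poly_eq_sum_atMost[OF degree_quadratic_power, symmetric]
      by (simp add: poly_power algebra_simps power2_eq_square)
    thus ?thesis
      using coeff_by_roots_of_unity[of k N "coeff u"] True
      by (simp add: polar_coeff_def u_def N_def \<omega>_def)
  qed
  ultimately show ?thesis by (rule ABC_poly_cong)
next
  case False
  thus ?thesis by (intro ABC_poly_cong[OF ABC_poly_zero]) (simp add: polar_coeff_eq_0)
qed

lemma ABC_poly_polar:
  assumes "is_form 1 (2 * e) F"
  shows "ABC_poly e (polar e F)"
proof -
  obtain c where c: "F = (\<lambda>x. \<Sum>a\<in>exps 1 (2 * e). c a * xmono 1 a x)"
    using assms by (auto simp: is_form_def)
  have "ABC_poly e (polar e (bin_monomial (2 * e) i))" if "i \<le> 2 * e" for i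
  proof -
    have "ABC_poly e (\<lambda>x y. fact e * of_nat (2 * e choose e) / of_nat (2 * e choose (2 * e - i))
        * polar_coeff e (2 * e - i) x y)"
      by (intro ABC_cmult ABC_poly_polar_coeff)
    thus ?thesis
      using polar_bin_monomial[of "2 * e - i" e] that by (elim ABC_poly_cong) (simp add: field_simps)
  qed
  hence "ABC_poly e (polar e (xmono 1 a))" if "a \<in> exps 1 (2 * e)" for a
    unfolding xmono_eq_bin_monomial[OF that] using exps_1[OF that] by simp
  hence "ABC_poly e (\<lambda>x y. \<Sum>a\<in>exps 1 (2 * e). c a * polar e (xmono 1 a) x y)"
    by (intro ABC_poly_lincomb finite_exps)
  thus ?thesis unfolding c
    by (rule ABC_poly_cong) (rule polar_sum[symmetric]; auto intro: finite_exps is_form_xmono)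
qed

lemma split_sum3:
  fixes a b c p q :: nat
  assumes "a + b + c = p + q"
  obtains a1 b1 c1 a2 b2 c2 where "a = a1 + a2" "b = b1 + b2" "c = c1 + c2"
    and "a1 + b1 + c1 = p" "a2 + b2 + c2 = q"
proof (cases "p \<le> a")
  case True
  show thesis by (rule that[of p "a - p" 0 b 0 c]) (use True assms in simp_all)
next
  case a: False
  show thesis
  proof (cases "p \<le> a + b")
    case True
    show thesis by (rule that[of a 0 "p - a" "b - (p - a)" 0 c]) (use a True assms in simp_all)
  next
    case False
    show thesis by (rule that[of a 0 b 0 "p - a - b" "c - (p - a - b)"]) (use a False assms in simp_all)
  qed
qed

lemma alpha_span_ABC_poly_split:
  assumes "ABC_poly (p + q) f"
    and "\<And>g h. ABC_poly p g \<Longrightarrow> ABC_poly q h \<Longrightarrow> alpha_span 1 e r (\<lambda>x y. g x y * h x y)"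
  shows "alpha_span 1 e r f"
  using assms(1)
proof (induction "p + q" f rule: ABC_poly.induct)
  case (ABC_monomial a b c)
  then obtain a1 b1 c1 a2 b2 c2 where split: "a = a1 + a2" "b = b1 + b2" "c = c1 + c2"
    and p: "a1 + b1 + c1 = p" and q: "a2 + b2 + c2 = q"
    by (rule split_sum3)
  have "ABC_poly p (\<lambda>x y. bin_A x y ^ a1 * bin_B x y ^ b1 * bin_C x y ^ c1)"
    unfolding p[symmetric] by (rule ABC_poly.ABC_monomial)
  moreover have "ABC_poly q (\<lambda>x y. bin_A x y ^ a2 * bin_B x y ^ b2 * bin_C x y ^ c2)"
    unfolding q[symmetric] by (rule ABC_poly.ABC_monomial)
  ultimately have "alpha_span 1 e r (\<lambda>x y. (bin_A x y ^ a1 * bin_B x y ^ b1 * bin_C x y ^ c1)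
      * (bin_A x y ^ a2 * bin_B x y ^ b2 * bin_C x y ^ c2))"
    by (rule assms(2))
  thus ?case by (rule alpha_span_cong) (simp add: split power_add mult_ac)
qed (simp_all add: alpha_span_add alpha_span_cmult)

text \<open>Needed for \<open>r = 3\<close>, where the cofactor of degree \<open>(r - 2) e = e\<close> lies in no \<open>W\<^sub>s\<close>.\<close>

lemma alpha_span_2_mult_ABC_poly:
  assumes "alpha_span 1 e 2 g" "ABC_poly e h"
  shows "alpha_span 1 e 3 (\<lambda>x y. g x y * h x y)"
proof -
  obtain k :: nat and c :: "nat \<Rightarrow> complex" and Fs :: "nat \<Rightarrow> nat \<Rightarrow> form"
    where Fs: "\<forall>j<k. \<forall>i<2. is_form 1 (2 * e) (Fs j i)"
    and g: "g = (\<lambda>x y. \<Sum>j<k. c j * alpha_prod e 2 (Fs j) x y)"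
    using assms(1) by (rule alpha_spanE)
  have "alpha_span 1 e 3 (\<lambda>x y. \<Sum>j<k. c j * (polar e (Fs j 0) x y * (polar e (Fs j 1) x y * h x y)))"
  proof (intro alpha_span_lincomb)
    fix j assume "j \<in> {..<k}"
    hence F: "is_form 1 (2 * e) (Fs j 0)" "is_form 1 (2 * e) (Fs j 1)" using Fs by auto
    have "ABC_poly (e + e) (\<lambda>x y. polar e (Fs j 1) x y * h x y)"
      by (rule ABC_poly_mult[OF ABC_poly_polar[OF F(2)] assms(2)])
    hence "alpha_span 1 e 2 (\<lambda>x y. polar e (Fs j 1) x y * h x y)"
      by (intro alpha_span_ABC_poly_2) (simp add: mult_2)
    from alpha_span_mult[OF alpha_span_polar[OF F(1)] this]
    show "alpha_span 1 e 3 (\<lambda>x y. polar e (Fs j 0) x y * (polar e (Fs j 1) x y * h x y))"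
      by (simp add: numeral_3_eq_3)
  qed simp
  moreover have "g x y * h x y = (\<Sum>j<k. c j * (polar e (Fs j 0) x y * (polar e (Fs j 1) x y * h x y)))" for x y
    by (simp add: g alpha_prod_def numeral_2_eq_2 lessThan_Suc sum_distrib_left sum_distrib_right mult_ac)
  ultimately show ?thesis by (simp add: alpha_span_cong)
qed

theorem alpha_span_ABC_poly:
  assumes "2 \<le> r" "ABC_poly (r * e) f"
  shows "alpha_span 1 e r f"
  using assms
proof (induction r arbitrary: f rule: less_induct)
  case (less r)
  consider "r = 2" | "r = 3" | "4 \<le> r" using less.prems(1) by linarith
  thus ?case
  proof cases
    case 1
    show ?thesis unfolding 1 by (rule alpha_span_ABC_poly_2) (use less.prems(2) 1 in \<open>simp add: mult.commute\<close>)
  next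
    case 2
    hence "ABC_poly (2 * e + e) f" using less.prems(2) by (simp add: algebra_simps)
    thus ?thesis unfolding 2
      by (rule alpha_span_ABC_poly_split) (rule alpha_span_2_mult_ABC_poly[OF alpha_span_ABC_poly_2])
  next
    case 3
    hence "ABC_poly (2 * e + (r - 2) * e) f" using less.prems(2) by (simp add: algebra_simps flip: add_mult_distrib)
    hence "alpha_span 1 e (2 + (r - 2)) f"
      using 3 by (elim alpha_span_ABC_poly_split) (intro alpha_span_mult alpha_span_ABC_poly_2 less.IH; simp)
    moreover have "2 + (r - 2) = r" using 3 by simp
    ultimately show ?thesis by (simp only:)
  qed
qed

section \<open>Forms in \<open>n + 1\<close> variables\<close>

inductive power_span :: "nat \<Rightarrow> nat \<Rightarrow> form \<Rightarrow> bool" for n m where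
  power_span_power: "power_span n m (\<lambda>x. lin_form n w x ^ m)"
| power_span_add: "power_span n m f \<Longrightarrow> power_span n m g \<Longrightarrow> power_span n m (\<lambda>x. f x + g x)"
| power_span_cmult: "power_span n m f \<Longrightarrow> power_span n m (\<lambda>x. s * f x)"

lemma power_span_cong: "power_span n m f \<Longrightarrow> (\<And>x. f x = g x) \<Longrightarrow> power_span n m g"
  by (metis ext)

lemma power_span_lincomb:
  "finite S \<Longrightarrow> (\<And>i. i \<in> S \<Longrightarrow> power_span n m (f i)) \<Longrightarrow> power_span n m (\<lambda>x. \<Sum>i\<in>S. c i * f i x)"
proof (induction S rule: finite_induct)
  case empty
  show ?case using power_span_cmult[OF power_span_power[of n m "\<lambda>_. 0"], of 0] by simp
qed (simp add: power_span_add power_span_cmult)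

lemma power_span_power_times_var:
  "power_span (Suc n) (p + k) (\<lambda>x. lin_form n w x ^ p * x (Suc n) ^ k)"
proof -
  define N where "N = Suc (p + k)"
  define W where "W s l = (if l \<le> n then s * w l else 1)" for s l
  have W: "lin_form (Suc n) (W s) x = s * lin_form n w x + x (Suc n)" for s x
    by (simp add: lin_form_def W_def sum_distrib_left mult.assoc)
  define c where "c x i = of_nat (p + k choose i) * lin_form n w x ^ i * x (Suc n) ^ (p + k - i)" for x i
  have expand: "lin_form (Suc n) (W s) x ^ (p + k) = (\<Sum>i<N. c x i * s ^ i)" for s x
    unfolding W binomial_ring N_def lessThan_Suc_atMost c_def by (simp add: power_mult_distrib mult_ac)
  define C :: complex where "C = of_nat (p + k choose p)"
  have "power_span (Suc n) (p + k)
      (\<lambda>x. \<Sum>j<N. 1 / C * ((unit_root N ^ j) ^ (N - p) / N) * lin_form (Suc n) (W (unit_root N ^ j)) x ^ (p + k))"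
    by (intro power_span_lincomb power_span_power) simp
  moreover have "(\<Sum>j<N. 1 / C * ((unit_root N ^ j) ^ (N - p) / N) * lin_form (Suc n) (W (unit_root N ^ j)) x ^ (p + k))
      = lin_form n w x ^ p * x (Suc n) ^ k" for x
  proof -
    have "(\<Sum>j<N. 1 / C * ((unit_root N ^ j) ^ (N - p) / N) * lin_form (Suc n) (W (unit_root N ^ j)) x ^ (p + k))
        = 1 / C * (\<Sum>j<N. (unit_root N ^ j) ^ (N - p) / N * lin_form (Suc n) (W (unit_root N ^ j)) x ^ (p + k))"
      by (simp only: sum_distrib_left mult.assoc)
    also have "(\<Sum>j<N. (unit_root N ^ j) ^ (N - p) / N * lin_form (Suc n) (W (unit_root N ^ j)) x ^ (p + k)) = c x p"
      unfolding expand by (rule coeff_by_roots_of_unity[symmetric]) (simp add: N_def)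
    also have "1 / C * c x p = lin_form n w x ^ p * x (Suc n) ^ k" by (simp add: c_def C_def)
    finally show ?thesis .
  qed
  ultimately show ?thesis by (rule power_span_cong)
qed

lemma power_span_mult_var:
  "power_span n p f \<Longrightarrow> power_span (Suc n) (p + k) (\<lambda>x. f x * x (Suc n) ^ k)"
proof (induction rule: power_span.induct)
  case (power_span_power w)
  thus ?case by (rule power_span_power_times_var)
next
  case (power_span_add f g)
  thus ?case by (simp add: distrib_right power_span.power_span_add)
next
  case (power_span_cmult f s)
  thus ?case using power_span.power_span_cmult[OF power_span_cmult.IH, of s] by (simp add: mult.assoc)
qed

lemma power_span_xmono: "a \<in> exps n m \<Longrightarrow> power_span n m (xmono n a)"
proof (induction n arbitrary: a m)
  case 0
  hence "a 0 = m" by (simp add: exps_def)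
  thus ?case
    using power_span_power[of 0 m "\<lambda>_. 1"] by (simp add: lin_form_def xmono_def)
next
  case (Suc n)
  define a' where "a' = a(Suc n := 0)"
  have "a' \<in> exps n (m - a (Suc n))" and "a (Suc n) \<le> m"
    using Suc.prems by (auto simp: exps_def a'_def)
  hence "power_span (Suc n) (m - a (Suc n) + a (Suc n)) (\<lambda>x. xmono n a' x * x (Suc n) ^ a (Suc n))"
    by (intro power_span_mult_var Suc.IH)
  moreover have "xmono n a' x * x (Suc n) ^ a (Suc n) = xmono (Suc n) a x" for x
    by (simp add: xmono_def a'_def)
  ultimately show ?case using \<open>a (Suc n) \<le> m\<close> by (simp add: power_span_cong)
qed

lemma alpha_span_sym_power_product:
  assumes "2 \<le> r" "power_span n (r * e) f" "power_span n (r * e) g"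
  shows "alpha_span n e r (\<lambda>x y. f x * g y + f y * g x)"
  using assms(2,3)
proof (induction arbitrary: g rule: power_span.induct)
  case (power_span_power v)
  thus ?case
  proof (induction rule: power_span.induct)
    case (power_span_power w)
    have "alpha_span 1 e r (sym_bin_monomial (r * e) (r * e) 0)"
      using assms(1) by (intro alpha_span_ABC_poly ABC_poly_sym_bin_monomial) auto
    hence "alpha_span n e r (\<lambda>x y. sym_bin_monomial (r * e) (r * e) 0 (binary_subst n v w x) (binary_subst n v w y))"
      by (rule alpha_span_binary_subst)
    thus ?case
      by (rule alpha_span_cong) (simp add: sym_bin_monomial_def bin_monomial_def binary_subst_def mult_ac)
  next
    case (power_span_add g1 g2)
    from alpha_span_add[OF power_span_add.IH] show ?case
      by (rule alpha_span_cong) (simp add: algebra_simps)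
  next
    case (power_span_cmult g s)
    thus ?case using alpha_span_cmult[OF power_span_cmult.IH, of s] by (simp add: algebra_simps)
  qed
next
  case (power_span_add f1 f2)
  from alpha_span_add[OF power_span_add.IH[OF power_span_add.prems]] show ?case
    by (rule alpha_span_cong) (simp add: algebra_simps)
next
  case (power_span_cmult f s)
  from alpha_span_cmult[OF power_span_cmult.IH[OF power_span_cmult.prems], of s] show ?case
    by (rule alpha_span_cong) (simp add: algebra_simps)
qed

lemma alpha_span_sym_biform:
  assumes "2 \<le> r" "is_sym_biform n (r * e) G"
  shows "alpha_span n e r G"
proof -
  obtain c where c: "G = (\<lambda>x y. \<Sum>a\<in>exps n (r * e). \<Sum>b\<in>exps n (r * e). c a b * xmono n a x * xmono n b y)"
    and sym: "\<And>x y. G x y = G y x"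
    using assms(2) unfolding is_sym_biform_def by blast
  have "alpha_span n e r (\<lambda>x y. \<Sum>a\<in>exps n (r * e). \<Sum>b\<in>exps n (r * e).
      c a b / 2 * (xmono n a x * xmono n b y + xmono n a y * xmono n b x))"
    using assms(1) by (intro alpha_span_lincomb alpha_span_sum alpha_span_sym_power_product power_span_xmono finite_exps)
  moreover have "G x y = (G x y + G y x) / 2" for x y using sym[of x y] by simp
  ultimately show ?thesis
    by (elim alpha_span_cong) (simp add: c sum.distrib[symmetric] sum_divide_distrib add_divide_distrib algebra_simps)
qed

theorem mainTheorem1:
  fixes n e r :: nat
  assumes "n \<ge> 1" and "e \<ge> 1" and "r \<ge> 2"
  shows "\<forall>G. is_sym_biform n (r * e) G \<longrightarrow>
           (\<exists>(k::nat) (c::nat \<Rightarrow> complex) (Fs::nat \<Rightarrow> nat \<Rightarrow> (nat \<Rightarrow> complex) \<Rightarrow> complex).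
              (\<forall>j<k. \<forall>i<r. is_form n (2 * e) (Fs j i)) \<and>
              G = (\<lambda>x y. \<Sum>j<k. c j * alpha_prod e r (Fs j) x y))"
proof (intro allI impI)
  fix G assume "is_sym_biform n (r * e) G"
  with \<open>r \<ge> 2\<close> have "alpha_span n e r G" by (rule alpha_span_sym_biform)
  thus "\<exists>(k::nat) (c::nat \<Rightarrow> complex) (Fs::nat \<Rightarrow> nat \<Rightarrow> (nat \<Rightarrow> complex) \<Rightarrow> complex).
      (\<forall>j<k. \<forall>i<r. is_form n (2 * e) (Fs j i)) \<and> G = (\<lambda>x y. \<Sum>j<k. c j * alpha_prod e r (Fs j) x y)"
    unfolding alpha_span_def .
qed

end
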